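(* Let $f:\Sigma\to\mathbb{S}^4_1$ be a non-isotropic conformal marginally trapped immersion with null Gauss map $G$. Then $f$ has identically zero mean curvature vector if and only if $G:\Sigma\to\mathbb{S}^3$ is a Willmore surface, i.e. its conformal invariants satisfy $k_{\bar z\bar z}+\frac{\bar s}{2}k=0$ for every local complex coordinate $z$.
   Context: $\mathbb{R}^5_1$ is $\mathbb{R}^5$ with $\langle x,y\rangle=x_0y_0+x_1y_1+x_2y_2+x_3y_3-x_4y_4$ (complex-bilinearly extended), $\mathbb{S}^4_1=\{\langle x,x\rangle=1\}$, future pointing means $\langle X,e_4\rangle<0$; $\mathcal L$ the light cone, $\mathbb{S}^3\cong P(\mathcal L)$. $f$ conformal spacelike immersion, $\langle f_z,f_{\bar z}\rangle=e^{2u}$; positively oriented orthonormal normal frame $\{N_1,N_2\}$: $\langle N_1,N_1\rangle=1,\langle N_2,N_2\rangle=-1,\langle N_1,N_2\rangle=0$, $N_2$ future pointing, orientation of $\nu(f)$; $\xi_1=\langle f_{zz},N_1\rangle$, $\xi_2=-\langle f_{zz},N_2\rangle$. $\mathbf H$: $f_{z\bar z}=-e^{2u}f+e^{2u}\mathbf H$; marginally trapped: $\langle\mathbf H,\mathbf H\rangle=0$, orientation with $\mathbf H=h(N_1+N_2)$. Non-isotropic: $\xi_1^2-\xi_2^2$ nowhere zero. Null Gauss map $G=[N_1+N_2]$. For a conformal immersion into $P(\mathcal L)$: canonical lift $Y$ (future light cone, $\langle Y_z,Y_{\bar z}\rangle=\frac12$), $V=\mathrm{span}\{Y,Y_z,Y_{\bar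 z},Y_{z\bar z}\}$, $N\in\Gamma(V)$ unique with $\langle N,N\rangle=\langle N,Y_z\rangle=0,\langle Y,N\rangle=-1$, Schwarzian $s=2\langle Y_{zz},N\rangle$, normal Hopf differential $\kappa=Y_{zz}+\frac s2Y$; for $G$, $V^\perp=\mathbb Rf$ and $k$ is the complex function with $\kappa=kf$. *)

theory Defs
  imports "HOL-Analysis.Analysis"
begin

(* Complexified Minkowski space R^5_1: vectors in complex^5 (components indexed 0..4),
   real vectors are those with vanishing imaginary parts. *)
type_synonym cvec = "complex ^ 5"

definition lor :: "cvec \<Rightarrow> cvec \<Rightarrow> complex" where
  "lor x y = x$0 * y$0 + x$1 * y$1 + x$2 * y$2 + x$3 * y$3 - x$4 * y$4"

definition realv :: "cvec \<Rightarrow> bool" where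
  "realv v \<longleftrightarrow> (\<forall>i. Im (v$i) = 0)"

definition e4 :: cvec where
  "e4 = (\<chi> i. if i = 4 then 1 else 0)"

definition future :: "cvec \<Rightarrow> bool" where
  "future X \<longleftrightarrow> realv X \<and> Re (lor X e4) < 0"

definition vre :: "cvec \<Rightarrow> cvec" where
  "vre v = (\<chi> i. complex_of_real (Re (v$i)))"

definition vim :: "cvec \<Rightarrow> cvec" where
  "vim v = (\<chi> i. complex_of_real (Im (v$i)))"

definition dx :: "(complex \<Rightarrow> 'a::real_normed_vector) \<Rightarrow> complex \<Rightarrow> 'a" where
  "dx g p = frechet_derivative g (at p) 1"

definition dy :: "(complex \<Rightarrow> 'a::real_normed_vector) \<Rightarrow> complex \<Rightarrow> 'a" where
  "dy g p = frechet_derivative g (at p) \<i>"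

fun pd :: "bool list \<Rightarrow> (complex \<Rightarrow> 'a::real_normed_vector) \<Rightarrow> complex \<Rightarrow> 'a" where
  "pd [] g = g"
| "pd (b # bs) g = (if b then dx else dy) (pd bs g)"

definition smooth_on :: "complex set \<Rightarrow> (complex \<Rightarrow> 'a::real_normed_vector) \<Rightarrow> bool" where
  "smooth_on U g \<longleftrightarrow> (\<forall>bs. \<forall>p\<in>U. pd bs g differentiable (at p))"

definition dz :: "(complex \<Rightarrow> cvec) \<Rightarrow> complex \<Rightarrow> cvec" where
  "dz g p = (1/2) *s (dx g p - \<i> *s dy g p)"

definition dzb :: "(complex \<Rightarrow> cvec) \<Rightarrow> complex \<Rightarrow> cvec" where
  "dzb g p = (1/2) *s (dx g p + \<i> *s dy g p)"

definition dzs :: "(complex \<Rightarrow> complex) \<Rightarrow> complex \<Rightarrow> complex" where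
  "dzs g p = (dx g p - \<i> * dy g p) / 2"

definition dzbs :: "(complex \<Rightarrow> complex) \<Rightarrow> complex \<Rightarrow> complex" where
  "dzbs g p = (dx g p + \<i> * dy g p) / 2"

definition e2u :: "(complex \<Rightarrow> cvec) \<Rightarrow> complex \<Rightarrow> real" where
  "e2u f p = Re (lor (dz f p) (dzb f p))"

(* conformal spacelike immersion on the coordinate domain U (z = identity coordinate) *)
definition conformal_spacelike_immersion :: "complex set \<Rightarrow> (complex \<Rightarrow> cvec) \<Rightarrow> bool" where
  "conformal_spacelike_immersion U f \<longleftrightarrow>
     open U \<and> smooth_on U f \<and>
     (\<forall>p\<in>U. realv (f p) \<and> lor (dz f p) (dz f p) = 0 \<and> e2u f p > 0)"

(* mean curvature vector:  f_{z zbar} = - e^{2u} f + e^{2u} H *)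
definition mean_curv :: "(complex \<Rightarrow> cvec) \<Rightarrow> complex \<Rightarrow> cvec" where
  "mean_curv f p = (1 / complex_of_real (e2u f p)) *s
      (dzb (dz f) p + complex_of_real (e2u f p) *s f p)"

definition normal_frame :: "complex set \<Rightarrow> (complex \<Rightarrow> cvec) \<Rightarrow> (complex \<Rightarrow> cvec) \<Rightarrow> (complex \<Rightarrow> cvec) \<Rightarrow> bool" where
  "normal_frame U f N1 N2 \<longleftrightarrow> smooth_on U N1 \<and> smooth_on U N2 \<and>
     (\<forall>p\<in>U. realv (N1 p) \<and> realv (N2 p) \<and>
        lor (N1 p) (N1 p) = 1 \<and> lor (N2 p) (N2 p) = -1 \<and> lor (N1 p) (N2 p) = 0 \<and>
        lor (N1 p) (f p) = 0 \<and> lor (N2 p) (f p) = 0 \<and>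
        lor (N1 p) (dz f p) = 0 \<and> lor (N2 p) (dz f p) = 0 \<and>
        future (N2 p))"

definition xi1 :: "(complex \<Rightarrow> cvec) \<Rightarrow> (complex \<Rightarrow> cvec) \<Rightarrow> complex \<Rightarrow> complex" where
  "xi1 f N1 p = lor (dz (dz f) p) (N1 p)"

definition xi2 :: "(complex \<Rightarrow> cvec) \<Rightarrow> (complex \<Rightarrow> cvec) \<Rightarrow> complex \<Rightarrow> complex" where
  "xi2 f N2 p = - lor (dz (dz f) p) (N2 p)"

(* canonical lift of the map [l] into P(L), for a future pointing null lift l:
   the positive rescaling Y of l with <Y_z, Y_zbar> = 1/2 *)
definition canon_lift :: "(complex \<Rightarrow> cvec) \<Rightarrow> complex \<Rightarrow> cvec" where
  "canon_lift l p = complex_of_real (1 / sqrt (2 * Re (lor (dz l p) (dzb l p)))) *s l p"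

(* V = span_R {Y, Y_z, Y_zbar, Y_{z zbar}} at p (real section) *)
definition Vspace :: "(complex \<Rightarrow> cvec) \<Rightarrow> complex \<Rightarrow> cvec set" where
  "Vspace Y p = {complex_of_real a *s Y p + complex_of_real b *s vre (dz Y p)
                 + complex_of_real c *s vim (dz Y p) + complex_of_real d *s vre (dzb (dz Y) p)
                 | a b c d. True}"

definition normalN :: "(complex \<Rightarrow> cvec) \<Rightarrow> complex \<Rightarrow> cvec" where
  "normalN Y p = (THE n. n \<in> Vspace Y p \<and> lor n n = 0 \<and> lor n (dz Y p) = 0 \<and> lor (Y p) n = -1)"

definition schwarzian :: "(complex \<Rightarrow> cvec) \<Rightarrow> complex \<Rightarrow> complex" where
  "schwarzian Y p = 2 * lor (dz (dz Y) p) (normalN Y p)"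

definition hopf_diff :: "(complex \<Rightarrow> cvec) \<Rightarrow> complex \<Rightarrow> cvec" where
  "hopf_diff Y p = dz (dz Y) p + (schwarzian Y p / 2) *s Y p"

definition kfun :: "(complex \<Rightarrow> cvec) \<Rightarrow> (complex \<Rightarrow> cvec) \<Rightarrow> complex \<Rightarrow> complex" where
  "kfun Y f p = (THE c. hopf_diff Y p = c *s f p)"

definition willmore_on :: "complex set \<Rightarrow> (complex \<Rightarrow> cvec) \<Rightarrow> (complex \<Rightarrow> cvec) \<Rightarrow> bool" where
  "willmore_on U Y f \<longleftrightarrow>
     (\<forall>p\<in>U. dzbs (dzbs (kfun Y f)) p + cnj (schwarzian Y p) / 2 * kfun Y f p = 0)"

end

theory Submission
  imports Defs
begin

text \<open>Put $l = N_1 + N_2$ and $m = N_1 - N_2$, a null frame of the normal bundle with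
  $\langle l, m\rangle = 2$, and $\alpha = \langle f_{zz}, l\rangle = \xi_1 - \xi_2$, which vanishes
  nowhere by non-isotropy. In the frame $f, f_z, f_{\bar z}, l, m$ of $\mathbb{C}^5$ the equation of
  the mean curvature reads $f_{z\bar z} = -e^{2u} f + e^{2u} h\, l$, and the Weingarten equation gives
  $l_{\bar z} = -(\bar\alpha / e^{2u}) f_z + \sigma l$. Consequently the canonical lift of $G$ is
  $Y = \mu l$ with $\mu = (2 |\alpha|^2 e^{-2u})^{-1/2}$, its Hopf differential is $\kappa = \mu\alpha f$,
  i.e. $k = \mu\alpha$, and comparing the $m$-components of $Y_{\bar z\bar z}$ and of the conjugate of
  $Y_{zz} = k f - \frac s2 Y$ yields $k_{\bar z\bar z} + \frac{\bar s}2 k = \mu |\alpha|^2 h$.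
  As $\mu\alpha \neq 0$, $G$ is Willmore iff $h = 0$, i.e. iff $\mathbf H = 0$.\<close>

section \<open>Partial derivatives and smoothness\<close>

definition partial :: "bool \<Rightarrow> (complex \<Rightarrow> 'a::real_normed_vector) \<Rightarrow> complex \<Rightarrow> 'a" where
  "partial b = (if b then dx else dy)"

definition direction :: "bool \<Rightarrow> complex" where
  "direction b = (if b then 1 else \<i>)"

lemma partial_eq_frechet_derivative: "partial b g p = frechet_derivative g (at p) (direction b)"
  by (simp add: partial_def direction_def dx_def dy_def)

lemma dx_eq_partial: "dx = partial True" and dy_eq_partial: "dy = partial False"
  by (simp_all add: partial_def)

lemma pd_Cons_partial: "pd (b # bs) g = partial b (pd bs g)"
  by (simp add: partial_def)

declare pd.simps(2)[simp del]

lemma pd_snoc: "pd (bs @ [b]) g = pd bs (partial b g)"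
  by (induction bs) (simp_all add: pd_Cons_partial)

lemma partial_has_derivative: "(g has_derivative g') (at p) \<Longrightarrow> partial b g p = g' (direction b)"
  by (metis partial_eq_frechet_derivative frechet_derivative_at)

lemma partial_cong_open:
  assumes "open U" "p \<in> U" "\<forall>q\<in>U. g q = g' q"
  shows "partial b g p = partial b g' p"
proof -
  have "(g has_derivative d) (at p) \<longleftrightarrow> (g' has_derivative d) (at p)" for d
    using assms has_derivative_transform_within_open by (metis (no_types, lifting))
  hence "frechet_derivative g (at p) = frechet_derivative g' (at p)"
    unfolding frechet_derivative_def by simp
  thus ?thesis by (simp add: partial_eq_frechet_derivative)
qed

lemma pd_cong_open:
  assumes "open U" "\<forall>q\<in>U. g q = g' q"
  shows "\<forall>q\<in>U. pd bs g q = pd bs g' q"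
proof (induction bs)
  case (Cons b bs)
  thus ?case by (metis partial_cong_open[OF assms(1)] pd_Cons_partial)
qed (use assms(2) in simp)

lemma differentiable_cong_open:
  assumes "open U" "p \<in> U" "\<forall>q\<in>U. g q = g' q" "g differentiable (at p)"
  shows "g' differentiable (at p)"
  using assms has_derivative_transform_within_open unfolding differentiable_def by metis

lemma differentiable_bounded_linear:
  "bounded_linear L \<Longrightarrow> g differentiable (at p) \<Longrightarrow> (\<lambda>q. L (g q)) differentiable (at p)"
  unfolding differentiable_def using bounded_linear.has_derivative by blast

lemma differentiable_bounded_bilinear:
  "bounded_bilinear pr \<Longrightarrow> g differentiable (at p) \<Longrightarrow> h differentiable (at p) \<Longrightarrow>
   (\<lambda>q. pr (g q) (h q)) differentiable (at p)"
  unfolding differentiable_def using bounded_bilinear.FDERIV by blast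

lemma partial_add:
  assumes "g differentiable (at p)" "h differentiable (at p)"
  shows "partial b (\<lambda>q. g q + h q) p = partial b g p + partial b h p"
  using partial_has_derivative[OF has_derivative_add[OF assms[unfolded frechet_derivative_works]]]
  by (simp add: partial_eq_frechet_derivative)

lemma partial_bounded_linear:
  assumes "bounded_linear L" "g differentiable (at p)"
  shows "partial b (\<lambda>q. L (g q)) p = L (partial b g p)"
  using partial_has_derivative[OF bounded_linear.has_derivative[OF assms(1) assms(2)[unfolded frechet_derivative_works]]]
  by (simp add: partial_eq_frechet_derivative)

lemma partial_bounded_bilinear:
  assumes "bounded_bilinear pr" "g differentiable (at p)" "h differentiable (at p)"
  shows "partial b (\<lambda>q. pr (g q) (h q)) p = pr (g p) (partial b h p) + pr (partial b g p) (h p)"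
  using partial_has_derivative[OF bounded_bilinear.FDERIV[OF assms(1) assms(2,3)[unfolded frechet_derivative_works]]]
  by (simp add: partial_eq_frechet_derivative)

lemma partial_const: "partial b (\<lambda>q. c) p = 0"
  by (simp add: partial_eq_frechet_derivative)

lemma partial_powr:
  fixes \<rho> :: "complex \<Rightarrow> real"
  assumes "\<rho> differentiable (at p)" "\<rho> p > 0"
  shows "partial b (\<lambda>q. \<rho> q powr r) p = partial b \<rho> p * (r * \<rho> p powr (r - 1))"
    and "(\<lambda>q. \<rho> q powr r) differentiable (at p)"
proof -
  have "((\<lambda>q. \<rho> q powr r) has_derivative
      (\<lambda>v. frechet_derivative \<rho> (at p) v * (r * \<rho> p powr (r - 1)))) (at p)"
    using DERIV_compose_FDERIV[OF has_real_derivative_powr[OF assms(2)] assms(1)[unfolded frechet_derivative_works]] .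
  from partial_has_derivative[OF this]
  show "partial b (\<lambda>q. \<rho> q powr r) p = partial b \<rho> p * (r * \<rho> p powr (r - 1))"
    by (simp add: partial_eq_frechet_derivative)
  show "(\<lambda>q. \<rho> q powr r) differentiable (at p)"
    using \<open>(_ has_derivative _) _\<close> by (rule differentiableI)
qed

definition smooth_upto :: "nat \<Rightarrow> complex set \<Rightarrow> (complex \<Rightarrow> 'a::real_normed_vector) \<Rightarrow> bool" where
  "smooth_upto n U g \<longleftrightarrow> (\<forall>bs. length bs \<le> n \<longrightarrow> (\<forall>p\<in>U. pd bs g differentiable (at p)))"

lemma smooth_on_iff_smooth_upto: "smooth_on U g \<longleftrightarrow> (\<forall>n. smooth_upto n U g)"
  unfolding smooth_on_def smooth_upto_def by auto

lemma smooth_upto_imp_differentiable: "smooth_upto n U g \<Longrightarrow> p \<in> U \<Longrightarrow> g differentiable (at p)"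
  unfolding smooth_upto_def by (metis le0 list.size(3) pd.simps(1))

lemma smooth_upto_Suc:
  "smooth_upto (Suc n) U g \<longleftrightarrow> (\<forall>p\<in>U. g differentiable (at p)) \<and> (\<forall>b. smooth_upto n U (partial b g))"
proof
  assume g: "smooth_upto (Suc n) U g"
  have "smooth_upto n U (partial b g)" for b
    unfolding smooth_upto_def
    by (metis g[unfolded smooth_upto_def] pd_snoc length_append_singleton not_less_eq_eq)
  thus "(\<forall>p\<in>U. g differentiable (at p)) \<and> (\<forall>b. smooth_upto n U (partial b g))"
    using g smooth_upto_imp_differentiable by blast
next
  assume g: "(\<forall>p\<in>U. g differentiable (at p)) \<and> (\<forall>b. smooth_upto n U (partial b g))"
  show "smooth_upto (Suc n) U g" unfolding smooth_upto_def
  proof (intro allI impI)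
    fix bs :: "bool list" assume "length bs \<le> Suc n"
    thus "\<forall>p\<in>U. pd bs g differentiable at p"
      using g unfolding smooth_upto_def by (cases bs rule: rev_exhaust) (simp_all add: pd_snoc)
  qed
qed

lemma smooth_upto_Suc_imp: "smooth_upto (Suc n) U g \<Longrightarrow> smooth_upto n U g"
  unfolding smooth_upto_def by auto

lemma smooth_upto_partial: "smooth_upto (Suc n) U g \<Longrightarrow> smooth_upto n U (partial b g)"
  using smooth_upto_Suc by blast

lemma smooth_upto_cong_open:
  assumes "open U" "\<forall>q\<in>U. g q = g' q" "smooth_upto n U g"
  shows "smooth_upto n U g'"
  unfolding smooth_upto_def
proof (intro allI impI ballI)
  fix bs :: "bool list" and p assume "length bs \<le> n" "p \<in> U"
  thus "pd bs g' differentiable at p"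
    using assms pd_cong_open[OF assms(1,2), of bs] differentiable_cong_open[OF assms(1)]
    unfolding smooth_upto_def by metis
qed

lemma smooth_upto_add:
  assumes "open U"
  shows "smooth_upto n U g \<Longrightarrow> smooth_upto n U h \<Longrightarrow> smooth_upto n U (\<lambda>q. g q + h q)"
proof (induction n arbitrary: g h)
  case 0 thus ?case unfolding smooth_upto_def by (simp add: differentiable_add)
next
  case (Suc n)
  have d: "\<forall>p\<in>U. g differentiable (at p)" "\<forall>p\<in>U. h differentiable (at p)"
    using Suc.prems unfolding smooth_upto_Suc by blast+
  have "smooth_upto n U (partial b (\<lambda>q. g q + h q))" for b
    using Suc.IH[OF smooth_upto_partial[OF Suc.prems(1), of b] smooth_upto_partial[OF Suc.prems(2), of b]]
    by (rule smooth_upto_cong_open[OF assms, rotated]) (simp add: d partial_add)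
  thus ?case using d unfolding smooth_upto_Suc by (simp add: differentiable_add)
qed

lemma smooth_upto_bounded_linear:
  assumes "open U" "bounded_linear L"
  shows "smooth_upto n U g \<Longrightarrow> smooth_upto n U (\<lambda>q. L (g q))"
proof (induction n arbitrary: g)
  case 0 thus ?case
    unfolding smooth_upto_def by (simp add: differentiable_bounded_linear[OF assms(2)])
next
  case (Suc n)
  have d: "\<forall>p\<in>U. g differentiable (at p)"
    using Suc.prems unfolding smooth_upto_Suc by blast
  have "smooth_upto n U (partial b (\<lambda>q. L (g q)))" for b
    using Suc.IH[OF smooth_upto_partial[OF Suc.prems, of b]]
    by (rule smooth_upto_cong_open[OF assms(1), rotated]) (simp add: d partial_bounded_linear[OF assms(2)])
  thus ?case using d unfolding smooth_upto_Suc by (simp add: differentiable_bounded_linear[OF assms(2)])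
qed

lemma smooth_upto_bounded_bilinear:
  assumes "open U" "bounded_bilinear pr"
  shows "smooth_upto n U g \<Longrightarrow> smooth_upto n U h \<Longrightarrow> smooth_upto n U (\<lambda>q. pr (g q) (h q))"
proof (induction n arbitrary: g h)
  case 0 thus ?case
    unfolding smooth_upto_def by (simp add: differentiable_bounded_bilinear[OF assms(2)])
next
  case (Suc n)
  have d: "\<forall>p\<in>U. g differentiable (at p)" "\<forall>p\<in>U. h differentiable (at p)"
    using Suc.prems unfolding smooth_upto_Suc by blast+
  have IH: "smooth_upto n U (\<lambda>q. pr (g q) (partial b h q) + pr (partial b g q) (h q))" for b
    using smooth_upto_add[OF assms(1) Suc.IH[OF smooth_upto_Suc_imp[OF Suc.prems(1)] smooth_upto_partial[OF Suc.prems(2)]]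
        Suc.IH[OF smooth_upto_partial[OF Suc.prems(1)] smooth_upto_Suc_imp[OF Suc.prems(2)]]] .
  have "smooth_upto n U (partial b (\<lambda>q. pr (g q) (h q)))" for b
    using IH[of b] by (rule smooth_upto_cong_open[OF assms(1), rotated]) (simp add: d partial_bounded_bilinear[OF assms(2)])
  thus ?case using d unfolding smooth_upto_Suc by (simp add: differentiable_bounded_bilinear[OF assms(2)])
qed

lemma smooth_upto_const: "smooth_upto n U (\<lambda>q. c)"
proof (induction n arbitrary: c)
  case (Suc n)
  have "partial b (\<lambda>q. c) = (\<lambda>q. 0)" for b by (simp add: partial_const fun_eq_iff)
  thus ?case unfolding smooth_upto_Suc using Suc.IH by simp
qed (simp add: smooth_upto_def)

lemma smooth_upto_powr:
  fixes \<rho> :: "complex \<Rightarrow> real"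
  assumes "open U" "\<forall>p\<in>U. \<rho> p > 0"
  shows "smooth_upto n U \<rho> \<Longrightarrow> smooth_upto n U (\<lambda>q. \<rho> q powr r)"
proof (induction n arbitrary: r)
  case 0 thus ?case unfolding smooth_upto_def using assms(2) by (simp add: partial_powr(2))
next
  case (Suc n)
  have d: "\<forall>p\<in>U. \<rho> differentiable (at p)"
    using Suc.prems unfolding smooth_upto_Suc by blast
  have IH: "smooth_upto n U (\<lambda>q. partial b \<rho> q * (r * \<rho> q powr (r - 1)))" for b
    using smooth_upto_bounded_bilinear[OF assms(1) bounded_bilinear_mult smooth_upto_partial[OF Suc.prems, of b]
        smooth_upto_bounded_bilinear[OF assms(1) bounded_bilinear_mult smooth_upto_const Suc.IH[OF smooth_upto_Suc_imp[OF Suc.prems]]]] .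
  have "smooth_upto n U (partial b (\<lambda>q. \<rho> q powr r))" for b
    using IH[of b] by (rule smooth_upto_cong_open[OF assms(1), rotated]) (simp add: d assms(2) partial_powr(1))
  thus ?case using d assms(2) unfolding smooth_upto_Suc by (simp add: partial_powr(2))
qed

lemma smooth_on_imp_differentiable: "smooth_on U g \<Longrightarrow> p \<in> U \<Longrightarrow> g differentiable (at p)"
  unfolding smooth_on_iff_smooth_upto using smooth_upto_imp_differentiable by blast

lemma smooth_on_partial: "smooth_on U g \<Longrightarrow> smooth_on U (partial b g)"
  unfolding smooth_on_iff_smooth_upto using smooth_upto_partial by blast

lemma smooth_on_cong_open:
  "open U \<Longrightarrow> \<forall>q\<in>U. g q = g' q \<Longrightarrow> smooth_on U g \<Longrightarrow> smooth_on U g'"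
  unfolding smooth_on_iff_smooth_upto using smooth_upto_cong_open by blast

lemma smooth_on_add:
  "open U \<Longrightarrow> smooth_on U g \<Longrightarrow> smooth_on U h \<Longrightarrow> smooth_on U (\<lambda>q. g q + h q)"
  unfolding smooth_on_iff_smooth_upto by (simp add: smooth_upto_add)

lemma smooth_on_bounded_linear:
  "open U \<Longrightarrow> bounded_linear L \<Longrightarrow> smooth_on U g \<Longrightarrow> smooth_on U (\<lambda>q. L (g q))"
  unfolding smooth_on_iff_smooth_upto by (simp add: smooth_upto_bounded_linear)

lemma smooth_on_bounded_bilinear:
  "open U \<Longrightarrow> bounded_bilinear pr \<Longrightarrow> smooth_on U g \<Longrightarrow> smooth_on U h \<Longrightarrow>
   smooth_on U (\<lambda>q. pr (g q) (h q))"
  unfolding smooth_on_iff_smooth_upto by (simp add: smooth_upto_bounded_bilinear)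

lemma smooth_on_powr:
  fixes \<rho> :: "complex \<Rightarrow> real"
  shows "open U \<Longrightarrow> \<forall>p\<in>U. \<rho> p > 0 \<Longrightarrow> smooth_on U \<rho> \<Longrightarrow> smooth_on U (\<lambda>q. \<rho> q powr r)"
  unfolding smooth_on_iff_smooth_upto by (simp add: smooth_upto_powr)

lemma smooth_on_minus:
  fixes g :: "complex \<Rightarrow> 'a::real_normed_vector"
  shows "open U \<Longrightarrow> smooth_on U g \<Longrightarrow> smooth_on U (\<lambda>q. - g q)"
  by (rule smooth_on_bounded_linear[OF _ bounded_linear_minus[OF bounded_linear_ident]])

lemma smooth_on_diff:
  fixes g :: "complex \<Rightarrow> 'a::real_normed_vector"
  shows "open U \<Longrightarrow> smooth_on U g \<Longrightarrow> smooth_on U h \<Longrightarrow> smooth_on U (\<lambda>q. g q - h q)"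
  using smooth_on_add[of U g "\<lambda>q. - h q"] smooth_on_minus[of U h] by simp

lemma has_real_derivative_along_line:
  fixes G :: "complex \<Rightarrow> real"
  assumes "G differentiable (at (c + of_real s * v))"
  shows "((\<lambda>s. G (c + of_real s * v)) has_real_derivative
           frechet_derivative G (at (c + of_real s * v)) v) (at s)"
proof -
  let ?G' = "frechet_derivative G (at (c + of_real s * v))"
  have "((\<lambda>s. c + of_real s * v) has_derivative (\<lambda>t. of_real t * v)) (at s)"
    by (intro derivative_eq_intros) auto
  hence "((G \<circ> (\<lambda>s. c + of_real s * v)) has_derivative (?G' \<circ> (\<lambda>t. of_real t * v))) (at s)"
    using diff_chain_at assms frechet_derivative_works by blast
  moreover have "?G' \<circ> (\<lambda>t. of_real t * v) = (\<lambda>t. ?G' v * t)"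
    using linear_scale[OF linear_frechet_derivative[OF assms], of _ v] by (auto simp: scaleR_conv_of_real)
  ultimately show ?thesis unfolding has_field_derivative_def comp_def by simp
qed

lemma mvt_parallel_segments:
  fixes G H :: "complex \<Rightarrow> real"
  assumes "t > 0"
    and "\<And>s. 0 \<le> s \<Longrightarrow> s \<le> t \<Longrightarrow>
           G differentiable (at (a + of_real s * v)) \<and> H differentiable (at (b + of_real s * v))"
  shows "\<exists>s. 0 < s \<and> s < t \<and> (G (a + of_real t * v) - H (b + of_real t * v)) - (G a - H b) =
           t * (frechet_derivative G (at (a + of_real s * v)) v - frechet_derivative H (at (b + of_real s * v)) v)"
  using MVT2[OF assms(1), of "\<lambda>s. G (a + of_real s * v) - H (b + of_real s * v)"]
    assms(2) by (simp add: DERIV_diff has_real_derivative_along_line)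

lemma second_difference_mixed_partials:
  fixes G :: "complex \<Rightarrow> real" and p :: complex
  defines "P s t \<equiv> p + of_real s + \<i> * of_real t"
  assumes h: "h > 0"
    and diff: "\<And>s t. 0 \<le> s \<Longrightarrow> s \<le> h \<Longrightarrow> 0 \<le> t \<Longrightarrow> t \<le> h \<Longrightarrow>
      G differentiable (at (P s t)) \<and> (\<forall>b. partial b G differentiable (at (P s t)))"
  shows "\<exists>s t. 0 < s \<and> s < h \<and> 0 < t \<and> t < h \<and>
      (G (P h h) - G (P h 0)) - (G (P 0 h) - G (P 0 0)) = h * h * partial False (partial True G) (P s t)"
    and "\<exists>s t. 0 < s \<and> s < h \<and> 0 < t \<and> t < h \<and>
      (G (P h h) - G (P h 0)) - (G (P 0 h) - G (P 0 0)) = h * h * partial True (partial False G) (P s t)"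
proof -
  let ?Gx = "partial True G" and ?Gy = "partial False G"
  have P_x: "p + \<i> * of_real t = P 0 t" "P 0 t + of_real s * 1 = P s t"
    and P_y: "p + of_real s = P s 0" "P s 0 + of_real t * \<i> = P s t" for s t
    by (simp_all add: P_def algebra_simps)
  have frechet_partial: "frechet_derivative F (at q) 1 = partial True F q"
    "frechet_derivative F (at q) \<i> = partial False F q" for F :: "complex \<Rightarrow> real" and q
    by (simp_all add: partial_eq_frechet_derivative direction_def)
  define \<Delta> where "\<Delta> = (G (P h h) - G (P h 0)) - (G (P 0 h) - G (P 0 0))"
  obtain s1 where s1: "0 < s1" "s1 < h" "\<Delta> = h * (?Gx (P s1 h) - ?Gx (P s1 0))"
    using mvt_parallel_segments[OF h, of G "p + \<i> * of_real h" 1 G "p + \<i> * of_real 0"]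
    unfolding P_x frechet_partial \<Delta>_def using diff h by (auto simp: algebra_simps)
  obtain t1 where t1: "0 < t1" "t1 < h" "?Gx (P s1 h) - ?Gx (P s1 0) = h * partial False ?Gx (P s1 t1)"
    using mvt_parallel_segments[OF h, of ?Gx "p + of_real s1" \<i> "\<lambda>_. 0" p]
    unfolding P_y frechet_partial frechet_derivative_const using diff s1 by auto
  show "\<exists>s t. 0 < s \<and> s < h \<and> 0 < t \<and> t < h \<and> \<Delta> = h * h * partial False ?Gx (P s t)"
    using s1 t1 by auto
  obtain t2 where t2: "0 < t2" "t2 < h" "\<Delta> = h * (?Gy (P h t2) - ?Gy (P 0 t2))"
    using mvt_parallel_segments[OF h, of G "p + of_real h" \<i> G "p + of_real 0"]
    unfolding P_y frechet_partial \<Delta>_def using diff h by (auto simp: algebra_simps)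
  obtain s2 where s2: "0 < s2" "s2 < h" "?Gy (P h t2) - ?Gy (P 0 t2) = h * partial True ?Gy (P s2 t2)"
    using mvt_parallel_segments[OF h, of ?Gy "p + \<i> * of_real t2" 1 "\<lambda>_. 0" p]
    unfolding P_x frechet_partial frechet_derivative_const using diff t2 by auto
  show "\<exists>s t. 0 < s \<and> s < h \<and> 0 < t \<and> t < h \<and> \<Delta> = h * h * partial True ?Gy (P s t)"
    using s2 t2 by auto
qed

lemma partial_partial_commute_real:
  fixes G :: "complex \<Rightarrow> real"
  assumes U: "open U" "p \<in> U" and G: "smooth_upto 2 U G"
  shows "partial False (partial True G) p = partial True (partial False G) p"
proof (rule ccontr)
  let ?Gxy = "partial False (partial True G)" and ?Gyx = "partial True (partial False G)"
  assume ne: "?Gxy p \<noteq> ?Gyx p"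
  define e where "e = \<bar>?Gxy p - ?Gyx p\<bar> / 2"
  have e: "e > 0" using ne by (simp add: e_def)
  have G1: "smooth_upto 1 U (partial b G)" for b
    using G smooth_upto_partial[of 1 U G b] by (simp add: numeral_2_eq_2)
  have dG: "q \<in> U \<Longrightarrow> G differentiable (at q) \<and> (\<forall>b. partial b G differentiable (at q))" for q
    using G G1 smooth_upto_imp_differentiable by blast
  have dG2: "q \<in> U \<Longrightarrow> partial b' (partial b G) differentiable (at q)" for q b b'
    using smooth_upto_partial[OF G1[of b, unfolded One_nat_def]] smooth_upto_imp_differentiable by blast
  have "isCont ?Gxy p" "isCont ?Gyx p"
    using dG2[OF U(2)] differentiable_imp_continuous_within by blast+
  then obtain r1 r2 where
    r1: "r1 > 0" "\<And>q. dist q p < r1 \<Longrightarrow> dist (?Gxy q) (?Gxy p) < e" and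
    r2: "r2 > 0" "\<And>q. dist q p < r2 \<Longrightarrow> dist (?Gyx q) (?Gyx p) < e"
    using e unfolding continuous_at_eps_delta by blast
  obtain r0 where r0: "r0 > 0" "ball p r0 \<subseteq> U" using U openE by blast
  define h where "h = min r0 (min r1 r2) / 4"
  have h: "h > 0" using r0 r1 r2 by (simp add: h_def)
  define P where "P s t = p + of_real s + \<i> * of_real t" for s t
  have near: "dist (P s t) p < min r0 (min r1 r2)" if "0 \<le> s" "s \<le> h" "0 \<le> t" "t \<le> h" for s t
  proof -
    have "dist (P s t) p = cmod (of_real s + \<i> * of_real t)" by (simp add: dist_norm P_def)
    also have "\<dots> \<le> cmod (of_real s) + cmod (\<i> * of_real t)" by (rule norm_triangle_ineq)
    also have "\<dots> = s + t" using that by (simp add: norm_mult)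
    finally show ?thesis using that h_def h by linarith
  qed
  have "P s t \<in> U" if "0 \<le> s" "s \<le> h" "0 \<le> t" "t \<le> h" for s t
    using near[OF that] r0(2) by (auto simp: dist_commute)
  with dG have diff: "G differentiable (at (P s t)) \<and> (\<forall>b. partial b G differentiable (at (P s t)))"
    if "0 \<le> s" "s \<le> h" "0 \<le> t" "t \<le> h" for s t using that by blast
  define \<Delta> where "\<Delta> = (G (P h h) - G (P h 0)) - (G (P 0 h) - G (P 0 0))"
  obtain s1 t1 where st1: "0 < s1" "s1 < h" "0 < t1" "t1 < h" and "\<Delta> = h * h * ?Gxy (P s1 t1)"
    using second_difference_mixed_partials(1)[of h G p, OF h diff[unfolded P_def]] unfolding \<Delta>_def P_def by blast
  moreover obtain s2 t2 where st2: "0 < s2" "s2 < h" "0 < t2" "t2 < h" and "\<Delta> = h * h * ?Gyx (P s2 t2)"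
    using second_difference_mixed_partials(2)[of h G p, OF h diff[unfolded P_def]] unfolding \<Delta>_def P_def by blast
  ultimately have "?Gxy (P s1 t1) = ?Gyx (P s2 t2)" using h by simp
  moreover have "dist (?Gxy (P s1 t1)) (?Gxy p) < e"
    using near[of s1 t1] st1 by (intro r1(2)) simp
  moreover have "dist (?Gyx (P s2 t2)) (?Gyx p) < e"
    using near[of s2 t2] st2 by (intro r2(2)) simp
  ultimately have "\<bar>?Gxy p - ?Gyx p\<bar> < 2 * e" unfolding dist_real_def by linarith
  thus False unfolding e_def by simp
qed

lemma partial_partial_commute:
  fixes g :: "complex \<Rightarrow> 'a::euclidean_space"
  assumes U: "open U" "p \<in> U" and g: "smooth_upto 2 U g"
  shows "partial False (partial True g) p = partial True (partial False g) p"
proof (rule euclidean_eqI)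
  fix i :: 'a
  let ?L = "\<lambda>v. v \<bullet> i"
  have L: "bounded_linear ?L" by (rule bounded_linear_inner_left)
  have dg: "q \<in> U \<Longrightarrow> g differentiable (at q)" for q
    using g smooth_upto_imp_differentiable by blast
  have dg1: "partial b g differentiable (at p)" for b
    using smooth_upto_partial[of 1 U g b] g U(2) smooth_upto_imp_differentiable by (simp add: numeral_2_eq_2)
  have "partial b' (partial b (\<lambda>q. ?L (g q))) p = ?L (partial b' (partial b g) p)" for b b'
  proof -
    have "partial b' (partial b (\<lambda>q. ?L (g q))) p = partial b' (\<lambda>q. ?L (partial b g q)) p"
      by (rule partial_cong_open[OF U]) (simp add: dg partial_bounded_linear[OF L])
    also have "\<dots> = ?L (partial b' (partial b g) p)" using partial_bounded_linear[OF L dg1] .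
    finally show ?thesis .
  qed
  thus "?L (partial False (partial True g) p) = ?L (partial True (partial False g) p)"
    using partial_partial_commute_real[OF U smooth_upto_bounded_linear[OF U(1) L g]] by simp
qed

section \<open>The Lorentzian form and Wirtinger derivatives\<close>

lemma lor_add_left [simp]: "lor (x + y) z = lor x z + lor y z"
  and lor_add_right [simp]: "lor z (x + y) = lor z x + lor z y"
  and lor_diff_left [simp]: "lor (x - y) z = lor x z - lor y z"
  and lor_diff_right [simp]: "lor z (x - y) = lor z x - lor z y"
  and lor_minus_left [simp]: "lor (- x) z = - lor x z"
  and lor_minus_right [simp]: "lor z (- x) = - lor z x"
  and lor_scale_left [simp]: "lor (c *s x) z = c * lor x z"
  and lor_scale_right [simp]: "lor z (c *s x) = c * lor z x"
  and lor_zero_left [simp]: "lor 0 z = 0"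
  and lor_zero_right [simp]: "lor z 0 = 0"
  by (simp_all add: lor_def algebra_simps)

lemma lor_commute: "lor x y = lor y x"
  by (simp add: lor_def algebra_simps)

lemma lor_scaleR_left: "lor (r *\<^sub>R x) z = r *\<^sub>R lor x z"
  unfolding lor_def vector_scaleR_component by (simp add: scaleR_conv_of_real algebra_simps)

lemma norm_vec_nth_mult_le: "norm ((a::'a::real_normed_div_algebra ^ 'n) $ i * b $ i) \<le> norm a * norm b"
proof -
  have "norm (a $ i) \<le> norm a" "norm (b $ i) \<le> norm b"
    unfolding norm_vec_def by (rule member_le_L2_set, simp_all)+
  thus ?thesis unfolding norm_mult by (simp add: mult_mono)
qed

lemma bounded_bilinear_lor: "bounded_bilinear lor"
proof (rule bounded_bilinear.intro)
  show "\<exists>K. \<forall>a b. norm (lor a b) \<le> norm a * norm b * K"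
  proof (intro exI allI)
    fix a b :: cvec
    have "norm (lor a b) \<le> norm (a$0*b$0) + norm (a$1*b$1) + norm (a$2*b$2) + norm (a$3*b$3) + norm (a$4*b$4)"
      unfolding lor_def using norm_triangle_ineq norm_triangle_ineq4 add_right_mono order_trans
      by (smt (verit))
    also have "\<dots> \<le> norm a * norm b * 5"
      using norm_vec_nth_mult_le[of a 0 b] norm_vec_nth_mult_le[of a 1 b] norm_vec_nth_mult_le[of a 2 b]
        norm_vec_nth_mult_le[of a 3 b] norm_vec_nth_mult_le[of a 4 b] by linarith
    finally show "norm (lor a b) \<le> norm a * norm b * 5" .
  qed
qed (unfold lor_def vector_scaleR_component, simp_all add: scaleR_conv_of_real algebra_simps)

lemma norm_vector_smult: "norm (a *s b) = norm (a::'a::real_normed_field) * norm (b :: 'a ^ 'n)"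
  by (simp add: norm_vec_def norm_mult L2_set_right_distrib)

lemma bounded_bilinear_vector_smult: "bounded_bilinear ((*s) :: 'a::real_normed_field \<Rightarrow> 'a ^ 'n \<Rightarrow> 'a ^ 'n)"
proof (rule bounded_bilinear.intro)
  show "\<exists>K. \<forall>(a::'a) (b::'a ^ 'n). norm (a *s b) \<le> norm a * norm b * K"
    by (rule exI[where x=1]) (simp add: norm_vector_smult)
  show "(r *\<^sub>R a) *s b = r *\<^sub>R (a *s b)" "a *s (r *\<^sub>R b) = r *\<^sub>R (a *s b)"
    for r and a :: 'a and b :: "'a ^ 'n"
    unfolding vec_eq_iff vector_smult_component vector_scaleR_component by (simp_all add: scaleR_conv_of_real)
qed (simp_all add: vector_sadd_rdistrib vector_add_ldistrib)

lemmas bounded_linear_vector_smult_right = bounded_bilinear.bounded_linear_right[OF bounded_bilinear_vector_smult]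

definition vcnj :: "cvec \<Rightarrow> cvec" where
  "vcnj v = (\<chi> i. cnj (v $ i))"

lemma vcnj_nth [simp]: "vcnj v $ i = cnj (v $ i)"
  by (simp add: vcnj_def)

lemma vcnj_vcnj [simp]: "vcnj (vcnj v) = v"
  and vcnj_add [simp]: "vcnj (x + y) = vcnj x + vcnj y"
  and vcnj_diff [simp]: "vcnj (x - y) = vcnj x - vcnj y"
  and vcnj_smult [simp]: "vcnj (c *s y) = cnj c *s vcnj y"
  by (simp_all add: vec_eq_iff)

lemma bounded_linear_vcnj: "bounded_linear vcnj"
  by (rule bounded_linear_intro[where K=1]) (simp_all add: vec_eq_iff norm_vec_def)

lemma cnj_lor: "cnj (lor x y) = lor (vcnj x) (vcnj y)"
  by (simp add: lor_def)

lemma realv_iff_vcnj: "realv v \<longleftrightarrow> vcnj v = v"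
  by (simp add: realv_def vec_eq_iff complex_eq_iff)

lemma vre_eq: "vre v = (1/2) *s (v + vcnj v)"
  and vim_eq: "vim v = (- \<i> / 2) *s (v - vcnj v)"
  by (simp_all add: vre_def vim_def vec_eq_iff complex_eq_iff)

lemma dz_eq_partial: "dz g p = (1/2) *s (partial True g p - \<i> *s partial False g p)"
  and dzb_eq_partial: "dzb g p = (1/2) *s (partial True g p + \<i> *s partial False g p)"
  and dzs_eq_partial: "dzs h p = (partial True h p - \<i> * partial False h p) / 2"
  and dzbs_eq_partial: "dzbs h p = (partial True h p + \<i> * partial False h p) / 2"
  by (simp_all add: dz_def dzb_def dzs_def dzbs_def dx_eq_partial dy_eq_partial)

lemma dz_cong_open: "open U \<Longrightarrow> p \<in> U \<Longrightarrow> \<forall>q\<in>U. g q = g' q \<Longrightarrow> dz g p = dz g' p"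
  and dzb_cong_open: "open U \<Longrightarrow> p \<in> U \<Longrightarrow> \<forall>q\<in>U. g q = g' q \<Longrightarrow> dzb g p = dzb g' p"
  and dzs_cong_open: "open U \<Longrightarrow> p \<in> U \<Longrightarrow> \<forall>q\<in>U. h q = h' q \<Longrightarrow> dzs h p = dzs h' p"
  and dzbs_cong_open: "open U \<Longrightarrow> p \<in> U \<Longrightarrow> \<forall>q\<in>U. h q = h' q \<Longrightarrow> dzbs h p = dzbs h' p"
  by (simp_all only: dz_eq_partial dzb_eq_partial dzs_eq_partial dzbs_eq_partial partial_cong_open[of U p])

lemma dzs_locally_const: "open U \<Longrightarrow> p \<in> U \<Longrightarrow> \<forall>q\<in>U. h q = c \<Longrightarrow> dzs h p = 0"
  and dzbs_locally_const: "open U \<Longrightarrow> p \<in> U \<Longrightarrow> \<forall>q\<in>U. h q = c \<Longrightarrow> dzbs h p = 0"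
  using dzs_cong_open[of U p h "\<lambda>q. c"] dzbs_cong_open[of U p h "\<lambda>q. c"]
  by (simp_all add: dzs_eq_partial dzbs_eq_partial partial_const)

lemma dz_add: "g differentiable (at p) \<Longrightarrow> g' differentiable (at p) \<Longrightarrow> dz (\<lambda>q. g q + g' q) p = dz g p + dz g' p"
  and dzb_add: "g differentiable (at p) \<Longrightarrow> g' differentiable (at p) \<Longrightarrow> dzb (\<lambda>q. g q + g' q) p = dzb g p + dzb g' p"
  by (simp_all add: dz_eq_partial dzb_eq_partial partial_add vec_eq_iff algebra_simps)

lemma dz_smult:
  "c differentiable (at p) \<Longrightarrow> g differentiable (at p) \<Longrightarrow> dz (\<lambda>q. c q *s g q) p = c p *s dz g p + dzs c p *s g p"
  and dzb_smult:
  "c differentiable (at p) \<Longrightarrow> g differentiable (at p) \<Longrightarrow> dzb (\<lambda>q. c q *s g q) p = c p *s dzb g p + dzbs c p *s g p"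
  by (simp_all add: dz_eq_partial dzb_eq_partial dzs_eq_partial dzbs_eq_partial
      partial_bounded_bilinear[OF bounded_bilinear_vector_smult] vec_eq_iff field_simps)

lemma dzs_lor:
  "g differentiable (at p) \<Longrightarrow> g' differentiable (at p) \<Longrightarrow>
   dzs (\<lambda>q. lor (g q) (g' q)) p = lor (dz g p) (g' p) + lor (g p) (dz g' p)"
  and dzbs_lor:
  "g differentiable (at p) \<Longrightarrow> g' differentiable (at p) \<Longrightarrow>
   dzbs (\<lambda>q. lor (g q) (g' q)) p = lor (dzb g p) (g' p) + lor (g p) (dzb g' p)"
  by (simp_all add: dz_eq_partial dzb_eq_partial dzs_eq_partial dzbs_eq_partial
      partial_bounded_bilinear[OF bounded_bilinear_lor] field_simps)

lemma dzbs_mult: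
  "h differentiable (at p) \<Longrightarrow> h' differentiable (at p) \<Longrightarrow>
   dzbs (\<lambda>q. h q * h' q) p = dzbs h p * h' p + h p * dzbs h' p"
  by (simp add: dzbs_eq_partial partial_bounded_bilinear[OF bounded_bilinear_mult] field_simps)

lemma dzb_vcnj: "g differentiable (at p) \<Longrightarrow> dzb (\<lambda>q. vcnj (g q)) p = vcnj (dz g p)"
  by (simp add: dzb_eq_partial dz_eq_partial partial_bounded_linear[OF bounded_linear_vcnj] vec_eq_iff)

lemma dzb_eq_vcnj_dz:
  assumes "open U" "p \<in> U" "\<forall>q\<in>U. realv (g q)" "g differentiable (at p)"
  shows "dzb g p = vcnj (dz g p)"
proof -
  have "dzb g p = dzb (\<lambda>q. vcnj (g q)) p"
    using dzb_cong_open[OF assms(1,2)] assms(3) by (simp add: realv_iff_vcnj)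
  thus ?thesis using dzb_vcnj[OF assms(4)] by simp
qed

lemma partial_wirtinger_combination:
  fixes X Y :: "complex \<Rightarrow> cvec"
  assumes "X differentiable (at p)" "Y differentiable (at p)"
  shows "partial b (\<lambda>q. (1/2) *s (X q + c *s Y q)) p = (1/2) *s (partial b X p + c *s partial b Y p)"
proof -
  have dY: "(\<lambda>q. c *s Y q) differentiable (at p)"
    using differentiable_bounded_linear[OF bounded_linear_vector_smult_right assms(2)] .
  have "partial b (\<lambda>q. (1/2) *s (X q + c *s Y q)) p = (1/2) *s partial b (\<lambda>q. X q + c *s Y q) p"
    using partial_bounded_linear[OF bounded_linear_vector_smult_right differentiable_add[OF assms(1) dY]] .
  also have "partial b (\<lambda>q. X q + c *s Y q) p = partial b X p + partial b (\<lambda>q. c *s Y q) p"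
    using partial_add[OF assms(1) dY] .
  also have "partial b (\<lambda>q. c *s Y q) p = c *s partial b Y p"
    using partial_bounded_linear[OF bounded_linear_vector_smult_right assms(2)] .
  finally show ?thesis .
qed

lemma dz_fun: "dz g = (\<lambda>q. (1/2) *s (partial True g q + (- \<i>) *s partial False g q))"
  and dzb_fun: "dzb g = (\<lambda>q. (1/2) *s (partial True g q + \<i> *s partial False g q))"
  and dzbs_fun: "dzbs h = (\<lambda>q. (1/2) * (partial True h q + \<i> * partial False h q))"
  by (simp_all add: fun_eq_iff dz_eq_partial dzb_eq_partial dzs_eq_partial dzbs_eq_partial vec_eq_iff field_simps)

lemma dzb_dz_commute:
  fixes g :: "complex \<Rightarrow> cvec"
  assumes U: "open U" "p \<in> U" and g: "smooth_on U g"
  shows "dzb (dz g) p = dz (dzb g) p"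
proof -
  have g2: "smooth_upto 2 U g" using g smooth_on_iff_smooth_upto by blast
  have d: "partial b g differentiable (at p)" for b
    using smooth_on_imp_differentiable[OF smooth_on_partial[OF g] U(2)] .
  have "partial b (dz g) p = (1/2) *s (partial b (partial True g) p + (- \<i>) *s partial b (partial False g) p)"
    and "partial b (dzb g) p = (1/2) *s (partial b (partial True g) p + \<i> *s partial b (partial False g) p)" for b
    unfolding dz_fun dzb_fun by (rule partial_wirtinger_combination[OF d d])+
  note partials = this[of True] this[of False]
  show ?thesis
    unfolding dzb_eq_partial[of "dz g"] dz_eq_partial[of "dzb g"] partials partial_partial_commute[OF U g2]
    by (simp add: vec_eq_iff field_simps)
qed

lemma smooth_on_dz: "open U \<Longrightarrow> smooth_on U g \<Longrightarrow> smooth_on U (dz g)"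
  and smooth_on_dzb: "open U \<Longrightarrow> smooth_on U g \<Longrightarrow> smooth_on U (dzb g)"
  unfolding dz_fun dzb_fun
  by (intro smooth_on_bounded_linear[OF _ bounded_linear_vector_smult_right] smooth_on_add smooth_on_partial; assumption)+

lemma smooth_on_dzbs: "open U \<Longrightarrow> smooth_on U h \<Longrightarrow> smooth_on U (dzbs h)"
  unfolding dzbs_fun
  by (intro smooth_on_bounded_linear[OF _ bounded_linear_mult_right] smooth_on_add smooth_on_partial; assumption)+

lemma smooth_on_lor: "open U \<Longrightarrow> smooth_on U g \<Longrightarrow> smooth_on U h \<Longrightarrow> smooth_on U (\<lambda>q. lor (g q) (h q))"
  by (rule smooth_on_bounded_bilinear[OF _ bounded_bilinear_lor])

lemma smooth_on_smult:
  fixes c :: "complex \<Rightarrow> complex" and g :: "complex \<Rightarrow> cvec"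
  shows "open U \<Longrightarrow> smooth_on U c \<Longrightarrow> smooth_on U g \<Longrightarrow> smooth_on U (\<lambda>q. c q *s g q)"
  by (rule smooth_on_bounded_bilinear[OF _ bounded_bilinear_vector_smult])

lemma smooth_on_mult:
  fixes h h' :: "complex \<Rightarrow> complex"
  shows "open U \<Longrightarrow> smooth_on U h \<Longrightarrow> smooth_on U h' \<Longrightarrow> smooth_on U (\<lambda>q. h q * h' q)"
  by (rule smooth_on_bounded_bilinear[OF _ bounded_bilinear_mult])

lemma lor_swap: "lor x y = c \<Longrightarrow> lor y x = c"
  by (simp add: lor_commute)

lemma lor_dz_swap_if_locally_const:
  assumes "open U" "smooth_on U F" "smooth_on U G" "p \<in> U" "\<forall>q\<in>U. lor (F q) (G q) = c"
  shows "lor (dz F p) (G p) = - lor (F p) (dz G p)"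
  using dzs_locally_const[OF assms(1,4,5)]
    dzs_lor[OF smooth_on_imp_differentiable[OF assms(2,4)] smooth_on_imp_differentiable[OF assms(3,4)]]
  by (simp add: eq_neg_iff_add_eq_0)

lemma lor_dzb_swap_if_locally_const:
  assumes "open U" "smooth_on U F" "smooth_on U G" "p \<in> U" "\<forall>q\<in>U. lor (F q) (G q) = c"
  shows "lor (dzb F p) (G p) = - lor (F p) (dzb G p)"
  using dzbs_locally_const[OF assms(1,4,5)]
    dzbs_lor[OF smooth_on_imp_differentiable[OF assms(2,4)] smooth_on_imp_differentiable[OF assms(3,4)]]
  by (simp add: eq_neg_iff_add_eq_0)

lemma lor_dz_self_if_locally_const:
  assumes "open U" "smooth_on U F" "p \<in> U" "\<forall>q\<in>U. lor (F q) (F q) = c"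
  shows "lor (dz F p) (F p) = 0"
  using lor_dz_swap_if_locally_const[OF assms(1,2,2,3,4)] by (simp add: lor_commute[of "F p"])

lemma lor_dzb_self_if_locally_const:
  assumes "open U" "smooth_on U F" "p \<in> U" "\<forall>q\<in>U. lor (F q) (F q) = c"
  shows "lor (dzb F p) (F p) = 0"
  using lor_dzb_swap_if_locally_const[OF assms(1,2,2,3,4)] by (simp add: lor_commute[of "F p"])

lemma exhaust_5: "(x::5) = 0 \<or> x = 1 \<or> x = 2 \<or> x = 3 \<or> x = 4"
proof (induct x)
  case (of_int z)
  then have "z = 0 \<or> z = 1 \<or> z = 2 \<or> z = 3 \<or> z = 4" by fastforce
  then show ?case by auto
qed

lemma lor_orthogonal_null_frame_eq_0:
  fixes e P Q R S v :: cvec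
  assumes frame: "lor e e = 1" "lor P P = 0" "lor Q Q = 0" "lor R R = 0" "lor S S = 0"
    "lor P Q = c" "c \<noteq> 0" "lor R S = d" "d \<noteq> 0"
    "lor e P = 0" "lor e Q = 0" "lor e R = 0" "lor e S = 0"
    "lor P R = 0" "lor P S = 0" "lor Q R = 0" "lor Q S = 0"
  and orth: "lor v e = 0" "lor v P = 0" "lor v Q = 0" "lor v R = 0" "lor v S = 0"
  shows "v = 0"
proof -
  define b where "b k = (if k = (0::5) then e else if k = 1 then P else if k = 2 then Q else if k = 3 then R else S)" for k
  define T where "T x = (\<chi> k. lor x (b k))" for x
  have "linear T"
    by (rule linearI) (simp_all add: T_def vec_eq_iff lor_scaleR_left)
  moreover have "surj T"
  proof (rule surjI)
    fix y :: cvec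
    let ?x = "y$0 *s e + (y$2 / c) *s P + (y$1 / c) *s Q + (y$4 / d) *s R + (y$3 / d) *s S"
    have "T ?x $ k = y $ k" for k
      using exhaust_5[of k] frame
      by (auto simp: T_def b_def lor_commute[of Q P] lor_commute[of S R] lor_commute[of P e] lor_commute[of Q e]
          lor_commute[of R e] lor_commute[of S e] lor_commute[of R P] lor_commute[of S P] lor_commute[of R Q]
          lor_commute[of S Q])
    thus "T ?x = y" by (simp add: vec_eq_iff)
  qed
  ultimately have "inj T" by (rule linear_surjective_imp_injective) simp
  moreover have "T v = T 0"
    using exhaust_5 orth by (auto simp: T_def b_def vec_eq_iff)
  ultimately show ?thesis by (metis injD)
qed

section \<open>The null normal frame of a marginally trapped surface\<close>

locale marginally_trapped_immersion =
  fixes U :: "complex set" and f N1 N2 :: "complex \<Rightarrow> complex ^ 5" and h :: "complex \<Rightarrow> real"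
  assumes immersion: "conformal_spacelike_immersion U f"
    and in_deSitter: "\<forall>p\<in>U. lor (f p) (f p) = 1"
    and frame: "normal_frame U f N1 N2"
    and orientation: "\<forall>p\<in>U. mean_curv f p = complex_of_real (h p) *s (N1 p + N2 p)"
    and non_isotropic: "\<forall>p\<in>U. (xi1 f N1 p)\<^sup>2 - (xi2 f N2 p)\<^sup>2 \<noteq> 0"
begin

abbreviation "fz \<equiv> dz f"
abbreviation "fzb \<equiv> dzb f"
abbreviation "fzz \<equiv> dz (dz f)"
abbreviation "fzzb \<equiv> dzb (dz f)"
abbreviation "fzbzb \<equiv> dzb (dzb f)"
abbreviation "E \<equiv> e2u f"

definition l where "l q = N1 q + N2 q"
definition m where "m q = N1 q - N2 q"
definition \<alpha> where "\<alpha> q = lor (l q) (fzz q)"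
definition \<sigma> where "\<sigma> q = lor (dzb l q) (m q) / 2"

text \<open>\<open>Eh\<close> is $e^{2u} h$ (lemma \<open>Eh_eq\<close>), defined through the $m$-component of $f_{z\bar z}$
  because $h$ itself is not assumed to be smooth.\<close>
definition Eh where "Eh q = lor (fzzb q) (m q) / 2"

lemma open_U: "open U"
  and smooth_f: "smooth_on U f"
  and real_f: "p \<in> U \<Longrightarrow> vcnj (f p) = f p"
  and lor_fz_fz: "p \<in> U \<Longrightarrow> lor (fz p) (fz p) = 0"
  and E_pos: "p \<in> U \<Longrightarrow> E p > 0"
  using immersion by (simp_all add: conformal_spacelike_immersion_def realv_iff_vcnj)

lemma smooth_N1: "smooth_on U N1"
  and smooth_N2: "smooth_on U N2"
  using frame by (simp_all add: normal_frame_def)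

lemma real_N1: "p \<in> U \<Longrightarrow> vcnj (N1 p) = N1 p"
  and real_N2: "p \<in> U \<Longrightarrow> vcnj (N2 p) = N2 p"
  and normal_frame_gram: "p \<in> U \<Longrightarrow>
     lor (N1 p) (N1 p) = 1 \<and> lor (N2 p) (N2 p) = -1 \<and> lor (N1 p) (N2 p) = 0 \<and>
     lor (N1 p) (f p) = 0 \<and> lor (N2 p) (f p) = 0 \<and> lor (N1 p) (fz p) = 0 \<and> lor (N2 p) (fz p) = 0"
  using frame by (simp_all add: normal_frame_def realv_iff_vcnj)

lemma smooth_l: "smooth_on U l"
  unfolding l_def[abs_def] by (rule smooth_on_add[OF open_U smooth_N1 smooth_N2])

lemma smooth_m: "smooth_on U m"
  unfolding m_def[abs_def] by (rule smooth_on_diff[OF open_U smooth_N1 smooth_N2])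

lemma smooth_fz: "smooth_on U fz"
  and smooth_fzb: "smooth_on U fzb"
  and smooth_fzz: "smooth_on U fzz"
  and smooth_fzzb: "smooth_on U fzzb"
  by (intro smooth_on_dz smooth_on_dzb open_U smooth_f)+

lemma smooth_\<alpha>: "smooth_on U \<alpha>"
  unfolding \<alpha>_def[abs_def] by (rule smooth_on_lor[OF open_U smooth_l smooth_fzz])

lemma smooth_\<sigma>: "smooth_on U \<sigma>"
  unfolding \<sigma>_def[abs_def]
  by (rule smooth_on_bounded_linear[OF open_U bounded_linear_divide
        smooth_on_lor[OF open_U smooth_on_dzb[OF open_U smooth_l] smooth_m]])

lemma smooth_Eh: "smooth_on U Eh"
  unfolding Eh_def[abs_def]
  by (rule smooth_on_bounded_linear[OF open_U bounded_linear_divide smooth_on_lor[OF open_U smooth_fzzb smooth_m]])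

lemma real_l: "p \<in> U \<Longrightarrow> vcnj (l p) = l p"
  and real_m: "p \<in> U \<Longrightarrow> vcnj (m p) = m p"
  by (simp_all add: l_def m_def real_N1 real_N2)

lemma fzb_eq_vcnj: "p \<in> U \<Longrightarrow> fzb p = vcnj (fz p)"
  by (rule dzb_eq_vcnj_dz[OF open_U _ _ smooth_on_imp_differentiable[OF smooth_f]])
    (auto simp: realv_iff_vcnj real_f)

lemma lzb_eq_vcnj: "p \<in> U \<Longrightarrow> dzb l p = vcnj (dz l p)"
  by (rule dzb_eq_vcnj_dz[OF open_U _ _ smooth_on_imp_differentiable[OF smooth_l]])
    (auto simp: realv_iff_vcnj real_l)

lemma fzbzb_eq_vcnj: "p \<in> U \<Longrightarrow> fzbzb p = vcnj (fzz p)"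
proof -
  assume p: "p \<in> U"
  have "fzbzb p = dzb (\<lambda>q. vcnj (fz q)) p"
    by (rule dzb_cong_open[OF open_U p]) (simp add: fzb_eq_vcnj)
  also have "\<dots> = vcnj (fzz p)" by (rule dzb_vcnj[OF smooth_on_imp_differentiable[OF smooth_fz p]])
  finally show ?thesis .
qed

lemma lor_fz_fzb: "p \<in> U \<Longrightarrow> lor (fz p) (fzb p) = of_real (E p)"
proof -
  assume p: "p \<in> U"
  have "cnj (lor (fz p) (fzb p)) = lor (fz p) (fzb p)"
    by (simp add: cnj_lor fzb_eq_vcnj[OF p] lor_commute)
  hence "lor (fz p) (fzb p) \<in> \<real>" by (simp add: Reals_cnj_iff)
  thus ?thesis by (simp add: e2u_def complex_is_Real_iff complex_eq_iff)
qed

lemma lor_f_f: "p \<in> U \<Longrightarrow> lor (f p) (f p) = 1"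
  using in_deSitter by simp

lemma lor_fz_f: "p \<in> U \<Longrightarrow> lor (fz p) (f p) = 0"
  and lor_fzb_f: "p \<in> U \<Longrightarrow> lor (fzb p) (f p) = 0"
  using lor_dz_self_if_locally_const[OF open_U smooth_f _ in_deSitter]
    lor_dzb_self_if_locally_const[OF open_U smooth_f _ in_deSitter] by simp_all

lemma lor_fzb_fzb: "p \<in> U \<Longrightarrow> lor (fzb p) (fzb p) = 0"
  using lor_fz_fz by (simp add: fzb_eq_vcnj flip: cnj_lor)

lemma lor_fzz_fz: "p \<in> U \<Longrightarrow> lor (fzz p) (fz p) = 0"
  using lor_dz_self_if_locally_const[OF open_U smooth_fz _ ] lor_fz_fz by blast

lemma lor_l_f: "p \<in> U \<Longrightarrow> lor (l p) (f p) = 0"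
  and lor_m_f: "p \<in> U \<Longrightarrow> lor (m p) (f p) = 0"
  and lor_l_fz: "p \<in> U \<Longrightarrow> lor (l p) (fz p) = 0"
  and lor_m_fz: "p \<in> U \<Longrightarrow> lor (m p) (fz p) = 0"
  and lor_l_l: "p \<in> U \<Longrightarrow> lor (l p) (l p) = 0"
  and lor_m_m: "p \<in> U \<Longrightarrow> lor (m p) (m p) = 0"
  and lor_l_m: "p \<in> U \<Longrightarrow> lor (l p) (m p) = 2"
  using normal_frame_gram by (simp_all add: l_def m_def lor_commute[of "N2 _" "N1 _"])

lemma lor_l_fzb: "p \<in> U \<Longrightarrow> lor (l p) (fzb p) = 0"
  and lor_m_fzb: "p \<in> U \<Longrightarrow> lor (m p) (fzb p) = 0"
proof -
  assume p: "p \<in> U"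
  have "lor (l p) (fzb p) = cnj (lor (l p) (fz p))" "lor (m p) (fzb p) = cnj (lor (m p) (fz p))"
    by (simp_all add: cnj_lor fzb_eq_vcnj[OF p] real_l[OF p] real_m[OF p])
  thus "lor (l p) (fzb p) = 0" "lor (m p) (fzb p) = 0" using lor_l_fz[OF p] lor_m_fz[OF p] by simp_all
qed

lemmas gram_off_diagonal = lor_fz_fzb lor_l_m
  lor_fz_f lor_fzb_f lor_l_f lor_m_f lor_l_fz lor_m_fz lor_l_fzb lor_m_fzb
lemmas gram = lor_f_f lor_fz_fz lor_fzb_fzb lor_l_l lor_m_m gram_off_diagonal gram_off_diagonal[THEN lor_swap]

lemma orthogonal_frame_eq_0:
  assumes p: "p \<in> U"
    and "lor v (f p) = 0" "lor v (fz p) = 0" "lor v (fzb p) = 0" "lor v (l p) = 0" "lor v (m p) = 0"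
  shows "v = 0"
  using lor_orthogonal_null_frame_eq_0[of "f p" "fz p" "fzb p" "l p" "m p" "of_real (E p)" 2 v]
    E_pos[OF p] assms(2-) gram[OF p] by simp

lemma Eh_eq: "p \<in> U \<Longrightarrow> Eh p = of_real (E p * h p)"
  and fzzb_eq: "p \<in> U \<Longrightarrow> fzzb p = (- of_real (E p)) *s f p + Eh p *s l p"
proof -
  assume p: "p \<in> U"
  have "(1 / of_real (E p)) *s (fzzb p + of_real (E p) *s f p) = of_real (h p) *s l p"
    using orientation p by (simp add: mean_curv_def l_def)
  hence "fzzb p = (- of_real (E p)) *s f p + of_real (E p * h p) *s l p"
    using E_pos[OF p] by (simp add: vec_eq_iff field_simps)
  moreover from this show "Eh p = of_real (E p * h p)"
    by (simp add: Eh_def gram[OF p])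
  ultimately show "fzzb p = (- of_real (E p)) *s f p + Eh p *s l p" by simp
qed

lemma lor_l_fzbzb: "p \<in> U \<Longrightarrow> lor (l p) (fzbzb p) = cnj (\<alpha> p)"
  by (simp add: \<alpha>_def cnj_lor fzbzb_eq_vcnj real_l)

lemma lzb_eq: "p \<in> U \<Longrightarrow> dzb l p = (- (cnj (\<alpha> p) / of_real (E p))) *s fz p + \<sigma> p *s l p"
proof -
  assume p: "p \<in> U"
  have dzb_swap: "lor (dzb l p) (F p) = - lor (l p) (dzb F p)"
    if "smooth_on U F" "\<forall>q\<in>U. lor (l q) (F q) = 0" for F
    by (rule lor_dzb_swap_if_locally_const[OF open_U smooth_l that(1) p that(2)])
  have "lor (dzb l p) (f p) = - lor (l p) (fzb p)"
    and "lor (dzb l p) (fz p) = - lor (l p) (fzzb p)"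
    and "lor (dzb l p) (fzb p) = - lor (l p) (fzbzb p)"
    by (intro dzb_swap smooth_f smooth_fz smooth_fzb ballI lor_l_f lor_l_fz lor_l_fzb; assumption)+
  hence "lor (dzb l p) (f p) = 0" "lor (dzb l p) (fz p) = 0" "lor (dzb l p) (fzb p) = - cnj (\<alpha> p)"
    by (simp_all add: fzzb_eq[OF p] gram[OF p] lor_l_fzbzb[OF p])
  moreover have "lor (dzb l p) (l p) = 0"
    using lor_dzb_self_if_locally_const[OF open_U smooth_l p] lor_l_l by blast
  ultimately have "dzb l p - ((- (cnj (\<alpha> p) / of_real (E p))) *s fz p + \<sigma> p *s l p) = 0"
    using E_pos[OF p] by (intro orthogonal_frame_eq_0[OF p]) (simp_all add: gram[OF p] \<sigma>_def)
  thus ?thesis by simp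
qed

lemma lz_eq: "p \<in> U \<Longrightarrow> dz l p = (- (\<alpha> p / of_real (E p))) *s fzb p + cnj (\<sigma> p) *s l p"
proof -
  assume p: "p \<in> U"
  have "dz l p = vcnj (dzb l p)" using lzb_eq_vcnj[OF p] by simp
  thus ?thesis unfolding lzb_eq[OF p] by (simp add: fzb_eq_vcnj[OF p] real_l[OF p])
qed

lemma \<alpha>_eq_xi: "\<alpha> p = xi1 f N1 p - xi2 f N2 p"
  by (simp add: \<alpha>_def l_def xi1_def xi2_def lor_commute)

lemma \<alpha>_nonzero: "p \<in> U \<Longrightarrow> \<alpha> p \<noteq> 0"
proof
  assume "p \<in> U" "\<alpha> p = 0"
  moreover have "(xi1 f N1 p)\<^sup>2 - (xi2 f N2 p)\<^sup>2 = \<alpha> p * (xi1 f N1 p + xi2 f N2 p)"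
    by (simp add: \<alpha>_eq_xi power2_eq_square algebra_simps)
  ultimately show False using non_isotropic by simp
qed

lemma lor_lz_l: "p \<in> U \<Longrightarrow> lor (dz l p) (l p) = 0"
  and lor_lzb_l: "p \<in> U \<Longrightarrow> lor (dzb l p) (l p) = 0"
  and lor_lz_lz: "p \<in> U \<Longrightarrow> lor (dz l p) (dz l p) = 0"
  and lor_lz_lzb: "p \<in> U \<Longrightarrow> lor (dz l p) (dzb l p) = of_real ((cmod (\<alpha> p))\<^sup>2 / E p)"
  and lor_lz_f: "p \<in> U \<Longrightarrow> lor (dz l p) (f p) = 0"
  and lor_lz_fz: "p \<in> U \<Longrightarrow> lor (dz l p) (fz p) = - \<alpha> p"
  and lor_lz_fzb: "p \<in> U \<Longrightarrow> lor (dz l p) (fzb p) = 0"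
  and lor_lzb_f: "p \<in> U \<Longrightarrow> lor (dzb l p) (f p) = 0"
  and lor_lzb_fz: "p \<in> U \<Longrightarrow> lor (dzb l p) (fz p) = 0"
  and lor_lzb_m: "p \<in> U \<Longrightarrow> lor (dzb l p) (m p) = 2 * \<sigma> p"
  using E_pos[of p]
  by (simp_all add: lz_eq lzb_eq gram lor_commute[of "l _" "fzb _"] field_simps
      complex_norm_square[symmetric] power2_eq_square)

section \<open>The canonical lift of the null Gauss map\<close>

definition \<rho> where "\<rho> q = Re (lor (dz l q) (dzb l q))"
definition \<mu> where "\<mu> q = complex_of_real (1 / sqrt (2 * \<rho> q))"
abbreviation "Y \<equiv> canon_lift l"

lemma Y_eq: "Y q = \<mu> q *s l q"
  by (simp add: canon_lift_def \<mu>_def \<rho>_def)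

lemma \<rho>_eq: "p \<in> U \<Longrightarrow> \<rho> p = (cmod (\<alpha> p))\<^sup>2 / E p"
  by (simp add: \<rho>_def lor_lz_lzb)

lemma \<rho>_pos: "p \<in> U \<Longrightarrow> \<rho> p > 0"
  using \<alpha>_nonzero E_pos \<rho>_eq by simp

lemma lor_lz_lzb_\<rho>: "p \<in> U \<Longrightarrow> lor (dz l p) (dzb l p) = of_real (\<rho> p)"
  by (simp add: \<rho>_eq lor_lz_lzb)

lemma smooth_\<mu>: "smooth_on U \<mu>"
proof -
  have "smooth_on U (\<lambda>q. 2 * \<rho> q)"
    unfolding \<rho>_def
    by (intro smooth_on_bounded_linear[OF open_U bounded_linear_mult_right]
        smooth_on_bounded_linear[OF open_U bounded_linear_Re]
        smooth_on_lor[OF open_U] smooth_on_dz smooth_on_dzb open_U smooth_l)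
  hence smooth: "smooth_on U (\<lambda>q. complex_of_real ((2 * \<rho> q) powr (- (1/2))))"
    using \<rho>_pos by (intro smooth_on_bounded_linear[OF open_U bounded_linear_of_real] smooth_on_powr[OF open_U]) auto
  have eq: "(2 * \<rho> q) powr (- (1/2)) = 1 / sqrt (2 * \<rho> q)" if "q \<in> U" for q
  proof -
    have "(2 * \<rho> q) powr (- (1/2)) = inverse ((2 * \<rho> q) powr (1/2))" by (rule powr_minus)
    also have "\<dots> = inverse (sqrt (2 * \<rho> q))"
      using \<rho>_pos[OF that] by (simp only: powr_half_sqrt less_imp_le mult_pos_pos zero_less_numeral)
    finally show ?thesis by (simp add: inverse_eq_divide)
  qed
  show ?thesis by (rule smooth_on_cong_open[OF open_U _ smooth]) (simp add: \<mu>_def eq)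
qed

lemma smooth_Y: "smooth_on U Y"
  and smooth_Yz: "smooth_on U (dz Y)"
  and smooth_Yzb: "smooth_on U (dzb Y)"
proof -
  show Y: "smooth_on U Y" unfolding Y_eq[abs_def] by (rule smooth_on_smult[OF open_U smooth_\<mu> smooth_l])
  show "smooth_on U (dz Y)" "smooth_on U (dzb Y)" by (intro smooth_on_dz smooth_on_dzb open_U Y)+
qed

lemma \<mu>_real [simp]: "cnj (\<mu> q) = \<mu> q"
  by (simp add: \<mu>_def)

lemma \<mu>_sq: "p \<in> U \<Longrightarrow> \<mu> p * \<mu> p * of_real (\<rho> p) = 1/2"
proof -
  assume p: "p \<in> U"
  have "(1 / sqrt (2 * \<rho> p)) * (1 / sqrt (2 * \<rho> p)) * \<rho> p = 1/2"
    using \<rho>_pos[OF p] by (simp add: field_simps)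
  thus ?thesis unfolding \<mu>_def by (metis of_real_mult of_real_divide of_real_1 of_real_numeral)
qed

lemma \<mu>_nonzero: "p \<in> U \<Longrightarrow> \<mu> p \<noteq> 0"
  using \<mu>_sq by fastforce

lemma Yz_eq: "p \<in> U \<Longrightarrow> dz Y p = \<mu> p *s dz l p + dzs \<mu> p *s l p"
  and Yzb_eq: "p \<in> U \<Longrightarrow> dzb Y p = \<mu> p *s dzb l p + dzbs \<mu> p *s l p"
  unfolding Y_eq[abs_def]
  by (intro dz_smult dzb_smult smooth_on_imp_differentiable[OF smooth_\<mu>] smooth_on_imp_differentiable[OF smooth_l];
      assumption)+

lemma Yzb_eq_vcnj: "p \<in> U \<Longrightarrow> dzb Y p = vcnj (dz Y p)"
  by (rule dzb_eq_vcnj_dz[OF open_U _ _ smooth_on_imp_differentiable[OF smooth_Y]])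
    (auto simp: realv_iff_vcnj Y_eq real_l)

lemma lor_Y_Y: "p \<in> U \<Longrightarrow> lor (Y p) (Y p) = 0"
  and lor_Y_f: "p \<in> U \<Longrightarrow> lor (Y p) (f p) = 0"
  and lor_Y_m: "p \<in> U \<Longrightarrow> lor (Y p) (m p) = 2 * \<mu> p"
  by (simp_all add: Y_eq gram)

lemma lor_Yz_Y: "p \<in> U \<Longrightarrow> lor (dz Y p) (Y p) = 0"
  and lor_Yzb_Y: "p \<in> U \<Longrightarrow> lor (dzb Y p) (Y p) = 0"
  using lor_dz_self_if_locally_const[OF open_U smooth_Y _ ] lor_dzb_self_if_locally_const[OF open_U smooth_Y _ ]
    lor_Y_Y by blast+

lemma lor_Yz_Yz: "p \<in> U \<Longrightarrow> lor (dz Y p) (dz Y p) = 0"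
  and lor_Yz_Yzb: "p \<in> U \<Longrightarrow> lor (dz Y p) (dzb Y p) = 1/2"
  and lor_Yz_f: "p \<in> U \<Longrightarrow> lor (dz Y p) (f p) = 0"
  and lor_Yz_fz: "p \<in> U \<Longrightarrow> lor (dz Y p) (fz p) = - \<mu> p * \<alpha> p"
  and lor_Yz_fzb: "p \<in> U \<Longrightarrow> lor (dz Y p) (fzb p) = 0"
  and lor_Yzb_f: "p \<in> U \<Longrightarrow> lor (dzb Y p) (f p) = 0"
  using \<mu>_sq[of p, unfolded mult.assoc]
  by (simp_all add: Yz_eq Yzb_eq lor_lz_lzb_\<rho> gram lor_lz_l lor_lzb_l lor_lz_l[THEN lor_swap] lor_lzb_l[THEN lor_swap]
      lor_lz_lz lor_lz_f lor_lz_fz lor_lz_fzb lor_lzb_f lor_lzb_fz)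

lemma lor_Yzb_Yzb: "p \<in> U \<Longrightarrow> lor (dzb Y p) (dzb Y p) = 0"
  using lor_Yz_Yz by (simp add: Yzb_eq_vcnj flip: cnj_lor)

abbreviation "W \<equiv> dzb (dz Y)"

lemma W_eq_dz_dzb: "p \<in> U \<Longrightarrow> W p = dz (dzb Y) p"
  by (rule dzb_dz_commute[OF open_U _ smooth_Y])

lemma W_real: "p \<in> U \<Longrightarrow> vcnj (W p) = W p"
proof -
  assume p: "p \<in> U"
  have "W p = dzb (\<lambda>q. vcnj (dzb Y q)) p"
    by (rule dzb_cong_open[OF open_U p]) (simp add: Yzb_eq_vcnj)
  also have "\<dots> = vcnj (dz (dzb Y) p)"
    by (rule dzb_vcnj[OF smooth_on_imp_differentiable[OF smooth_Yzb p]])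
  finally show ?thesis by (simp add: W_eq_dz_dzb[OF p])
qed

lemma lor_Y_W:
  assumes p: "p \<in> U"
  shows "lor (Y p) (W p) = - (1/2)"
proof -
  have "lor (dzb Y p) (dz Y p) = - lor (Y p) (W p)"
    by (rule lor_dzb_swap_if_locally_const[OF open_U smooth_Y smooth_Yz p lor_Yz_Y[THEN lor_swap, THEN ballI]])
  thus ?thesis using lor_Yz_Yzb[THEN lor_swap, OF p] by (metis minus_minus)
qed

lemma lor_Yz_W: "p \<in> U \<Longrightarrow> lor (dz Y p) (W p) = 0"
  using lor_dzb_self_if_locally_const[OF open_U smooth_Yz _ lor_Yz_Yz[THEN ballI]] by (simp add: lor_commute)

lemma lor_Yzb_W: "p \<in> U \<Longrightarrow> lor (dzb Y p) (W p) = 0"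
  using lor_dz_self_if_locally_const[OF open_U smooth_Yzb _ lor_Yzb_Yzb[THEN ballI]]
  by (simp add: W_eq_dz_dzb lor_commute)

lemma lor_f_W: "p \<in> U \<Longrightarrow> lor (f p) (W p) = 0"
  using lor_dzb_swap_if_locally_const[OF open_U smooth_f smooth_Yz _ lor_Yz_f[THEN lor_swap, THEN ballI]]
    lor_Yz_fzb[THEN lor_swap] by simp

lemma lor_W_W_real: "p \<in> U \<Longrightarrow> lor (W p) (W p) = of_real (Re (lor (W p) (W p)))"
  using W_real by (metis Reals_cnj_iff cnj_lor of_real_Re)

definition conformal_normal where
  "conformal_normal p = of_real (2 * Re (lor (W p) (W p))) *s Y p + 2 *s W p"

lemma lor_conformal_normal:
  assumes p: "p \<in> U"
  shows "lor (conformal_normal p) (conformal_normal p) = 0" and "lor (Y p) (conformal_normal p) = -1"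
    and "lor (dz Y p) (conformal_normal p) = 0" and "lor (dzb Y p) (conformal_normal p) = 0"
    and "lor (f p) (conformal_normal p) = 0"
  using lor_W_W_real[OF p]
  by (simp_all add: conformal_normal_def lor_Y_Y[OF p] lor_Y_W[OF p] lor_Y_W[THEN lor_swap, OF p]
      lor_Yz_Y[OF p] lor_Yz_W[OF p] lor_Yzb_Y[OF p] lor_Yzb_W[OF p] lor_Y_f[THEN lor_swap, OF p]
      lor_f_W[OF p] algebra_simps)

lemma normalN_eq: assumes p: "p \<in> U" shows "normalN Y p = conformal_normal p"
  unfolding normalN_def
proof (rule the_equality)
  have Wre: "vre (W p) = W p" using W_real[OF p] by (simp add: vre_eq vec_eq_iff)
  have "conformal_normal p = of_real (2 * Re (lor (W p) (W p))) *s Y p + of_real 0 *s vre (dz Y p)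
      + of_real 0 *s vim (dz Y p) + of_real 2 *s vre (W p)"
    using Wre by (simp add: conformal_normal_def)
  hence "conformal_normal p \<in> Vspace Y p" unfolding Vspace_def by blast
  thus "conformal_normal p \<in> Vspace Y p \<and> lor (conformal_normal p) (conformal_normal p) = 0 \<and>
      lor (conformal_normal p) (dz Y p) = 0 \<and> lor (Y p) (conformal_normal p) = -1"
    using lor_conformal_normal[OF p] lor_conformal_normal(3)[THEN lor_swap, OF p] by simp
next
  fix n assume n: "n \<in> Vspace Y p \<and> lor n n = 0 \<and> lor n (dz Y p) = 0 \<and> lor (Y p) n = -1"
  then obtain x y z w where n_def: "n = of_real x *s Y p + of_real y *s vre (dz Y p)
      + of_real z *s vim (dz Y p) + of_real w *s vre (W p)"
    unfolding Vspace_def by blast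
  have n_eq: "n = of_real x *s Y p + (of_real y / 2) *s (dz Y p + dzb Y p)
      + (of_real z * (- \<i> / 2)) *s (dz Y p - dzb Y p) + of_real w *s W p"
    unfolding n_def vre_eq[of "dz Y p"] vim_eq[of "dz Y p"] vre_eq[of "W p"] W_real[OF p]
    by (simp add: Yzb_eq_vcnj[OF p] vec_eq_iff)
  have "lor (Y p) n = - of_real w / 2"
    unfolding n_eq
    by (simp add: lor_Y_Y[OF p] lor_Yz_Y[THEN lor_swap, OF p] lor_Yzb_Y[THEN lor_swap, OF p] lor_Y_W[OF p])
  hence w: "w = 2" using n by (simp add: complex_eq_iff)
  have "lor n (dz Y p) = (of_real y / 2) * (1/2) + (of_real z * (- \<i> / 2)) * (0 - 1/2)"
    unfolding n_eq
    by (simp add: lor_Yz_Y[THEN lor_swap, OF p] lor_Yz_Yz[OF p] lor_Yz_Yzb[THEN lor_swap, OF p] lor_Yz_W[THEN lor_swap, OF p])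
  hence "y = 0" "z = 0" using n by (simp_all add: complex_eq_iff)
  hence n_eq': "n = of_real x *s Y p + 2 *s W p" using n_eq w by simp
  have "lor n n = - 2 * of_real x + 4 * lor (W p) (W p)"
    unfolding n_eq' by (simp add: lor_Y_Y[OF p] lor_Y_W[OF p] lor_Y_W[THEN lor_swap, OF p] algebra_simps)
  hence "x = 2 * Re (lor (W p) (W p))" using n lor_W_W_real[OF p] by (simp add: complex_eq_iff)
  thus "n = conformal_normal p" using n_eq' by (simp add: conformal_normal_def)
qed

lemma lor_Yzz_f: "p \<in> U \<Longrightarrow> lor (dz (dz Y) p) (f p) = \<mu> p * \<alpha> p"
  using lor_dz_swap_if_locally_const[OF open_U smooth_Yz smooth_f _ lor_Yz_f[THEN ballI]] lor_Yz_fz by simp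

lemma lor_Yzz_Y: "p \<in> U \<Longrightarrow> lor (dz (dz Y) p) (Y p) = 0"
  using lor_dz_swap_if_locally_const[OF open_U smooth_Yz smooth_Y _ lor_Yz_Y[THEN ballI]] lor_Yz_Yz by simp

lemma lor_Yzz_Yz: "p \<in> U \<Longrightarrow> lor (dz (dz Y) p) (dz Y p) = 0"
  using lor_dz_self_if_locally_const[OF open_U smooth_Yz _ lor_Yz_Yz[THEN ballI]] .

lemma lor_Yzz_Yzb: "p \<in> U \<Longrightarrow> lor (dz (dz Y) p) (dzb Y p) = 0"
  using lor_dz_swap_if_locally_const[OF open_U smooth_Yz smooth_Yzb _ lor_Yz_Yzb[THEN ballI]] lor_Yz_W
  by (simp add: W_eq_dz_dzb)

lemma hopf_diff_eq: assumes p: "p \<in> U" shows "hopf_diff Y p = (\<mu> p * \<alpha> p) *s f p"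
proof -
  note N = lor_conformal_normal[OF p]
  have "hopf_diff Y p - (\<mu> p * \<alpha> p) *s f p = 0"
    by (rule lor_orthogonal_null_frame_eq_0[OF lor_f_f[OF p] lor_Yz_Yz[OF p] lor_Yzb_Yzb[OF p] lor_Y_Y[OF p]
          N(1) lor_Yz_Yzb[OF p] _ N(2) _ lor_Yz_f[THEN lor_swap, OF p] lor_Yzb_f[THEN lor_swap, OF p]
          lor_Y_f[THEN lor_swap, OF p] N(5) lor_Yz_Y[OF p] N(3) lor_Yzb_Y[OF p] N(4)])
      (simp_all add: hopf_diff_def schwarzian_def normalN_eq[OF p] lor_Yzz_f[OF p] lor_Yzz_Y[OF p]
        lor_Yzz_Yz[OF p] lor_Yzz_Yzb[OF p] N lor_f_f[OF p] lor_Y_f[OF p] lor_Y_Y[OF p]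
        lor_Yz_f[THEN lor_swap, OF p] lor_Yzb_f[THEN lor_swap, OF p] lor_Yz_Y[THEN lor_swap, OF p]
        lor_Yzb_Y[THEN lor_swap, OF p] lor_Y_f[THEN lor_swap, OF p])
  thus ?thesis by simp
qed

lemma kfun_eq: assumes p: "p \<in> U" shows "kfun Y f p = \<mu> p * \<alpha> p"
  unfolding kfun_def
proof (rule the_equality)
  show "hopf_diff Y p = (\<mu> p * \<alpha> p) *s f p" by (rule hopf_diff_eq[OF p])
  fix c assume "hopf_diff Y p = c *s f p"
  hence "c *s f p = (\<mu> p * \<alpha> p) *s f p" using hopf_diff_eq[OF p] by argo
  moreover have "f p \<noteq> 0" using lor_f_f[OF p] by auto
  ultimately show "c = \<mu> p * \<alpha> p" by (metis vector_mul_rcancel)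
qed

lemma lor_Yzz_m: "p \<in> U \<Longrightarrow> lor (dz (dz Y) p) (m p) = - schwarzian Y p * \<mu> p"
proof -
  assume p: "p \<in> U"
  have "dz (dz Y) p = (\<mu> p * \<alpha> p) *s f p - (schwarzian Y p / 2) *s Y p"
    using hopf_diff_eq[OF p] by (simp add: hopf_diff_def algebra_simps)
  thus ?thesis by (simp add: gram[OF p] lor_Y_m[OF p])
qed

lemma smooth_E: "smooth_on U (\<lambda>q. complex_of_real (E q))"
  unfolding e2u_def
  by (intro smooth_on_bounded_linear[OF open_U bounded_linear_of_real]
      smooth_on_bounded_linear[OF open_U bounded_linear_Re] smooth_on_lor[OF open_U smooth_fz smooth_fzb])

lemma lor_l_dz_fzzb: assumes p: "p \<in> U" shows "lor (l p) (dz fzzb p) = 0"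
proof -
  have smooth_mE: "smooth_on U (\<lambda>q. - complex_of_real (E q))" by (rule smooth_on_minus[OF open_U smooth_E])
  have "dz fzzb p = dz (\<lambda>q. (- of_real (E q)) *s f q + Eh q *s l q) p"
    by (rule dz_cong_open[OF open_U p]) (simp add: fzzb_eq)
  also have "\<dots> = dz (\<lambda>q. (- of_real (E q)) *s f q) p + dz (\<lambda>q. Eh q *s l q) p"
    by (intro dz_add smooth_on_imp_differentiable[OF _ p] smooth_on_smult open_U smooth_mE smooth_f smooth_Eh smooth_l)
  also have "dz (\<lambda>q. (- of_real (E q)) *s f q) p = (- of_real (E p)) *s fz p + dzs (\<lambda>q. - of_real (E q)) p *s f p"
    by (intro dz_smult smooth_on_imp_differentiable[OF _ p] smooth_mE smooth_f)
  also have "dz (\<lambda>q. Eh q *s l q) p = Eh p *s dz l p + dzs Eh p *s l p"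
    by (intro dz_smult smooth_on_imp_differentiable[OF _ p] smooth_Eh smooth_l)
  finally show ?thesis by (simp add: gram[OF p] lor_lz_l[THEN lor_swap, OF p])
qed

lemma dzbs_\<alpha>: assumes p: "p \<in> U" shows "dzbs \<alpha> p = \<sigma> p * \<alpha> p"
proof -
  have "dzbs \<alpha> p = lor (dzb l p) (fzz p) + lor (l p) (dzb fzz p)"
    unfolding \<alpha>_def[abs_def]
    by (rule dzbs_lor[OF smooth_on_imp_differentiable[OF smooth_l p] smooth_on_imp_differentiable[OF smooth_fzz p]])
  also have "dzb fzz p = dz fzzb p"
    by (rule dzb_dz_commute[OF open_U p smooth_fz])
  also have "lor (dzb l p) (fzz p) = \<sigma> p * \<alpha> p"
    by (simp add: lzb_eq[OF p] lor_fzz_fz[THEN lor_swap, OF p] \<alpha>_def)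
  finally show ?thesis by (simp add: lor_l_dz_fzzb[OF p])
qed

text \<open>$Y_{\bar z} = P\, l - T f_z$ (lemma \<open>Yzb_eq_frame\<close>). Writing \<open>E powr -1\<close> rather than
  \<open>1 / E\<close> makes the smoothness of \<open>T\<close> an instance of \<open>smooth_on_powr\<close>.\<close>
definition P where "P q = dzbs \<mu> q + \<mu> q * \<sigma> q"
definition T where "T q = \<mu> q * cnj (\<alpha> q) * of_real (E q powr - 1)"

lemma smooth_P: "smooth_on U P"
  unfolding P_def[abs_def]
  by (intro smooth_on_add smooth_on_mult smooth_on_dzbs open_U smooth_\<mu> smooth_\<sigma>)

lemma smooth_T: "smooth_on U T"
proof -
  have "smooth_on U (\<lambda>q. E q powr - 1)"
    using E_pos smooth_on_bounded_linear[OF open_U bounded_linear_Re smooth_E]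
    by (intro smooth_on_powr[OF open_U]) simp_all
  thus ?thesis
    unfolding T_def[abs_def]
    by (intro smooth_on_mult smooth_on_bounded_linear[OF open_U bounded_linear_of_real]
        smooth_on_bounded_linear[OF open_U bounded_linear_cnj] open_U smooth_\<mu> smooth_\<alpha>)
qed

lemma T_eq: "p \<in> U \<Longrightarrow> T p = \<mu> p * cnj (\<alpha> p) / of_real (E p)"
  using E_pos[of p] by (simp add: T_def powr_minus divide_inverse)

lemma Yzb_eq_frame: "p \<in> U \<Longrightarrow> dzb Y p = P p *s l p + (- T p) *s fz p"
  using E_pos[of p] by (simp add: Yzb_eq lzb_eq T_eq P_def vec_eq_iff algebra_simps)

lemma dzbs_kfun: assumes p: "p \<in> U" shows "dzbs (kfun Y f) p = P p * \<alpha> p"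
proof -
  have "dzbs (kfun Y f) p = dzbs (\<lambda>q. \<mu> q * \<alpha> q) p"
    by (rule dzbs_cong_open[OF open_U p]) (simp add: kfun_eq)
  also have "\<dots> = dzbs \<mu> p * \<alpha> p + \<mu> p * dzbs \<alpha> p"
    by (intro dzbs_mult smooth_on_imp_differentiable[OF _ p] smooth_\<mu> smooth_\<alpha>)
  finally show ?thesis by (simp add: dzbs_\<alpha>[OF p] P_def algebra_simps)
qed

lemma dzbs_dzbs_kfun: assumes p: "p \<in> U"
  shows "dzbs (dzbs (kfun Y f)) p = dzbs P p * \<alpha> p + P p * \<sigma> p * \<alpha> p"
proof -
  have "dzbs (dzbs (kfun Y f)) p = dzbs (\<lambda>q. P q * \<alpha> q) p"
    by (rule dzbs_cong_open[OF open_U p]) (simp add: dzbs_kfun)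
  also have "\<dots> = dzbs P p * \<alpha> p + P p * dzbs \<alpha> p"
    by (intro dzbs_mult smooth_on_imp_differentiable[OF _ p] smooth_P smooth_\<alpha>)
  finally show ?thesis by (simp add: dzbs_\<alpha>[OF p] algebra_simps)
qed

lemma lor_Yzbzb_m: assumes p: "p \<in> U"
  shows "lor (dzb (dzb Y) p) (m p) = 2 * P p * \<sigma> p + 2 * dzbs P p - 2 * T p * Eh p"
proof -
  have smooth_mT: "smooth_on U (\<lambda>q. - T q)" by (rule smooth_on_minus[OF open_U smooth_T])
  have "dzb (dzb Y) p = dzb (\<lambda>q. P q *s l q + (- T q) *s fz q) p"
    by (rule dzb_cong_open[OF open_U p]) (simp add: Yzb_eq_frame)
  also have "\<dots> = dzb (\<lambda>q. P q *s l q) p + dzb (\<lambda>q. (- T q) *s fz q) p"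
    by (intro dzb_add smooth_on_imp_differentiable[OF _ p] smooth_on_smult open_U smooth_P smooth_l smooth_mT smooth_fz)
  also have "dzb (\<lambda>q. P q *s l q) p = P p *s dzb l p + dzbs P p *s l p"
    by (intro dzb_smult smooth_on_imp_differentiable[OF _ p] smooth_P smooth_l)
  also have "dzb (\<lambda>q. (- T q) *s fz q) p = (- T p) *s fzzb p + dzbs (\<lambda>q. - T q) p *s fz p"
    by (intro dzb_smult smooth_on_imp_differentiable[OF _ p] smooth_mT smooth_fz)
  finally have Yzbzb: "dzb (dzb Y) p =
      P p *s dzb l p + dzbs P p *s l p + ((- T p) *s fzzb p + dzbs (\<lambda>q. - T q) p *s fz p)" .
  show ?thesis unfolding Yzbzb by (simp add: lor_lzb_m[OF p] gram[OF p] Eh_def algebra_simps)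
qed

lemma cnj_schwarzian: assumes p: "p \<in> U"
  shows "- cnj (schwarzian Y p) * \<mu> p = 2 * P p * \<sigma> p + 2 * dzbs P p - 2 * T p * Eh p"
proof -
  have "dzb (dzb Y) p = dzb (\<lambda>q. vcnj (dz Y q)) p"
    by (rule dzb_cong_open[OF open_U p]) (simp add: Yzb_eq_vcnj)
  also have "\<dots> = vcnj (dz (dz Y) p)"
    by (rule dzb_vcnj[OF smooth_on_imp_differentiable[OF smooth_Yz p]])
  finally have "lor (dzb (dzb Y) p) (m p) = cnj (lor (dz (dz Y) p) (m p))"
    by (simp add: cnj_lor real_m[OF p])
  thus ?thesis by (simp add: lor_Yzz_m[OF p] lor_Yzbzb_m[OF p])
qed

lemma willmore_expression: assumes p: "p \<in> U"
  shows "dzbs (dzbs (kfun Y f)) p + cnj (schwarzian Y p) / 2 * kfun Y f p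
    = \<mu> p * of_real ((cmod (\<alpha> p))\<^sup>2 * h p)"
proof -
  have "dzbs (dzbs (kfun Y f)) p + cnj (schwarzian Y p) / 2 * kfun Y f p
      = (dzbs P p + P p * \<sigma> p + (cnj (schwarzian Y p) * \<mu> p) / 2) * \<alpha> p"
    by (simp add: dzbs_dzbs_kfun[OF p] kfun_eq[OF p] algebra_simps)
  also have "cnj (schwarzian Y p) * \<mu> p = - 2 * P p * \<sigma> p - 2 * dzbs P p + 2 * T p * Eh p"
    using cnj_schwarzian[OF p] by (simp add: algebra_simps)
  also have "(dzbs P p + P p * \<sigma> p + (- 2 * P p * \<sigma> p - 2 * dzbs P p + 2 * T p * Eh p) / 2) * \<alpha> p
      = T p * Eh p * \<alpha> p"
    by (simp add: field_simps)
  also have "\<dots> = \<mu> p * of_real ((cmod (\<alpha> p))\<^sup>2 * h p)"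
    using E_pos[OF p]
    by (simp add: T_eq[OF p] Eh_eq[OF p] complex_norm_square[symmetric] power2_eq_square field_simps)
  finally show ?thesis .
qed

lemma mean_curv_eq_0_iff_willmore:
  "(\<forall>p\<in>U. mean_curv f p = 0) \<longleftrightarrow> willmore_on U (canon_lift (\<lambda>q. N1 q + N2 q)) f"
proof -
  have "mean_curv f p = 0 \<longleftrightarrow> h p = 0" if p: "p \<in> U" for p
  proof -
    have "l p \<noteq> 0" using lor_l_m[OF p] by auto
    thus ?thesis using orientation p by (simp add: l_def[symmetric])
  qed
  moreover have "dzbs (dzbs (kfun Y f)) p + cnj (schwarzian Y p) / 2 * kfun Y f p = 0 \<longleftrightarrow> h p = 0"
    if p: "p \<in> U" for p
    unfolding willmore_expression[OF p] using \<mu>_nonzero[OF p] \<alpha>_nonzero[OF p] by simp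
  ultimately show ?thesis unfolding willmore_on_def l_def[abs_def, symmetric] by simp
qed

end

theorem mainTheorem9:
  fixes U :: "complex set" and f N1 N2 :: "complex \<Rightarrow> complex ^ 5" and h :: "complex \<Rightarrow> real"
  assumes immersion: "conformal_spacelike_immersion U f"
    and in_deSitter: "\<forall>p\<in>U. lor (f p) (f p) = 1"
    and frame: "normal_frame U f N1 N2"
    and marginally_trapped: "\<forall>p\<in>U. lor (mean_curv f p) (mean_curv f p) = 0"
    and orientation: "\<forall>p\<in>U. mean_curv f p = complex_of_real (h p) *s (N1 p + N2 p)"
    and non_isotropic: "\<forall>p\<in>U. (xi1 f N1 p)\<^sup>2 - (xi2 f N2 p)\<^sup>2 \<noteq> 0"
  shows "(\<forall>p\<in>U. mean_curv f p = 0) \<longleftrightarrow>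
         willmore_on U (canon_lift (\<lambda>q. N1 q + N2 q)) f"
proof -
  interpret marginally_trapped_immersion U f N1 N2 h
    using immersion in_deSitter frame orientation non_isotropic by unfold_locales
  show ?thesis by (rule mean_curv_eq_0_iff_willmore)
qed

end
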